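(* Let $A(B)$ be a first-order formula, where $B$ is a subformula occurrence in the context $A(\circ)$ and no quantifier of the context $A$ binds a variable of $B$. Let $sk(B)$ be obtained by skolemizing all strong quantifier occurrences of $B$ (with polarity taken in $A(B)$). Then: (1) If $\models_1 A(B)$, then $\models_1 A(sk(B))$. (2) There are Skolem axioms $S_1,\dots,S_k$ (for the Skolem functions introduced) such that if $S_1,\dots,S_k\models_1 A(sk(B))$, then $S_1,\dots,S_k\models_1 A(B)$. (3) If $S_1,\dots,S_k$ are Skolem axioms, $A$ is a formula containing none of their Skolem functions, and $S_1,\dots,S_k\models_1 A$, then $\models_1 A$.
   Context: The propositional setting is as follows. - A lattice-oriented signature $\mathcal{L}$ is a finite set of connectives. Each connective $c$ has an arity $n_c$ and a polarity $p_c:\{1,\dots,n_c\}\to\{-,+\}$. It includes binary $\lor,\land,\to$ with $p_\lor\equiv p_\land\equiv +$, $p_\to(1)=-$ and $p_\to(2)=+$. - A finite $\mathcal{L}$-lattice $\mathbf{A}$ is a finite set $L$ with operations $c^L$ such that $(L,\lor^L,\land^L)$ is a lattice with order $\le$ and top $1$. Each $c^L$ is monotone in the arguments with polarity $+$ and antitone in those with polarity $-$. Moreover $1\le a\to b$ iff $a\le b$. The first-order setting is as follows. - Fix a finite $\mathcal{L}$-lattice $\mathbf{A}$ and a predicate language with predicate and function symbols of given arities. - Terms and formulas are built as usual from object variables using the connectives of $\mathcal{L}$ and the quantifiers $\forall,\exists$. - A structure consists of a nonempty set $S$, maps $P^S:S^n\to L$ for the $n$-ary predicate symbols, and maps $f^S:S^n\to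 S$ for the $n$-ary function symbols. - An evaluation $v$ maps variables to $S$. Formulas get values in $L$: connectives are interpreted by $c^L$; $\|\forall x\varphi\|_v=\bigwedge_{a\in S}\|\varphi\|_{v[x\to a]}$ and $\|\exists x\varphi\|_v=\bigvee_{a\in S}\|\varphi\|_{v[x\to a]}$. - $\models_1 C$ means $\|C\|_v=1$ for every structure and every evaluation $v$. - $C_1,\dots,C_n\models_1 C'$ means $\models_1\forall\bar x(\bigwedge_i C_i\to C')$, where $\bar x$ are the free variables. - An occurrence in a formula is positive or negative: the whole formula is positive, and going into argument $i$ of a connective $c$ keeps the polarity if $p_c(i)=+$ and flips it if $p_c(i)=-$. Quantifiers do not change polarity. - Strong quantifier occurrences are positive occurrences of $\forall$ and negative occurrences of $\exists$. Weak quantifier occurrences are positive occurrences of $\exists$ and negative occurrences of $\forall$. Skolemization uses $|W|=|L|$, the number of truth values. Each strong occurrence $\exists x\,C(x)$ in $B$ is replaced by $\bigvee_{i=1}^{|W|}C(f_i(\bar x))$, and each strong occurrence $\forall x\,C(x)$ by $\bigwedge_{i=1}^{|W|}C(f_i(\bar x))$. Here the $f_i$ are new function symbols (Skolem functions) and $\bar x$ are the variables of the weak quantifiers in whose scope the occurrence lies. Skolem axioms are the closed sentences $\forall\bar x\,(\exists y\,A(y,\bar x)\to\bigvee_{i=1}^{|W|}A(f_i(\bar x),\bar x))$ and $\forall\bar x\,(\bigwedge_{i=1}^{|W|}A(f_i(\bar x),\bar x)\to\forall y\,A(y,\bar x))$, with new function symbols $f_i$. *)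

theory Defs
  imports Main
begin

datatype 'f trm = Var nat | Fn 'f "'f trm list"

text \<open>Formulas over a lattice-oriented signature: the binary connectives
  Or, And, Imp are always present; further connectives of type 'c have an arity
  and a polarity given separately.\<close>
datatype ('c, 'p, 'f) fm =
    Atom 'p "'f trm list"
  | Or "('c, 'p, 'f) fm" "('c, 'p, 'f) fm"
  | And "('c, 'p, 'f) fm" "('c, 'p, 'f) fm"
  | Imp "('c, 'p, 'f) fm" "('c, 'p, 'f) fm"
  | Conn 'c "('c, 'p, 'f) fm list"
  | All nat "('c, 'p, 'f) fm"
  | Ex nat "('c, 'p, 'f) fm"

fun fvt :: "'f trm \<Rightarrow> nat set" where
  "fvt (Var x) = {x}"
| "fvt (Fn f ts) = (\<Union>t\<in>set ts. fvt t)"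

fun fv :: "('c, 'p, 'f) fm \<Rightarrow> nat set" where
  "fv (Atom p ts) = (\<Union>t\<in>set ts. fvt t)"
| "fv (Or a b) = fv a \<union> fv b"
| "fv (And a b) = fv a \<union> fv b"
| "fv (Imp a b) = fv a \<union> fv b"
| "fv (Conn c as) = (\<Union>a\<in>set as. fv a)"
| "fv (All x a) = fv a - {x}"
| "fv (Ex x a) = fv a - {x}"

fun funst :: "'f trm \<Rightarrow> 'f set" where
  "funst (Var x) = {}"
| "funst (Fn f ts) = insert f (\<Union>t\<in>set ts. funst t)"

fun funs :: "('c, 'p, 'f) fm \<Rightarrow> 'f set" where
  "funs (Atom p ts) = (\<Union>t\<in>set ts. funst t)"
| "funs (Or a b) = funs a \<union> funs b"
| "funs (And a b) = funs a \<union> funs b"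
| "funs (Imp a b) = funs a \<union> funs b"
| "funs (Conn c as) = (\<Union>a\<in>set as. funs a)"
| "funs (All x a) = funs a"
| "funs (Ex x a) = funs a"

fun wf :: "('c \<Rightarrow> nat) \<Rightarrow> ('c, 'p, 'f) fm \<Rightarrow> bool" where
  "wf ar (Atom p ts) = True"
| "wf ar (Or a b) = (wf ar a \<and> wf ar b)"
| "wf ar (And a b) = (wf ar a \<and> wf ar b)"
| "wf ar (Imp a b) = (wf ar a \<and> wf ar b)"
| "wf ar (Conn c as) = (length as = ar c \<and> list_all (wf ar) as)"
| "wf ar (All x a) = wf ar a"
| "wf ar (Ex x a) = wf ar a"

text \<open>Capture-avoiding simultaneous substitution (bound variables are renamed
  only when a capture would otherwise occur).\<close>
fun substt :: "(nat \<Rightarrow> 'f trm) \<Rightarrow> 'f trm \<Rightarrow> 'f trm" where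
  "substt s (Var x) = s x"
| "substt s (Fn f ts) = Fn f (map (substt s) ts)"

definition fresh_var :: "nat set \<Rightarrow> nat \<Rightarrow> nat" where
  "fresh_var S y = (if y \<notin> S then y else Suc (Max S))"

fun subst :: "(nat \<Rightarrow> 'f trm) \<Rightarrow> ('c, 'p, 'f) fm \<Rightarrow> ('c, 'p, 'f) fm" where
  "subst s (Atom p ts) = Atom p (map (substt s) ts)"
| "subst s (Or a b) = Or (subst s a) (subst s b)"
| "subst s (And a b) = And (subst s a) (subst s b)"
| "subst s (Imp a b) = Imp (subst s a) (subst s b)"
| "subst s (Conn c as) = Conn c (map (subst s) as)"
| "subst s (All y a) =
     (let y' = fresh_var (\<Union>z\<in>fv (All y a). fvt (s z)) y
      in All y' (subst (s(y := Var y')) a))"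
| "subst s (Ex y a) =
     (let y' = fresh_var (\<Union>z\<in>fv (Ex y a). fvt (s z)) y
      in Ex y' (subst (s(y := Var y')) a))"

definition subst1 :: "nat \<Rightarrow> 'f trm \<Rightarrow> ('c, 'p, 'f) fm \<Rightarrow> ('c, 'p, 'f) fm" where
  "subst1 x t a = subst (Var(x := t)) a"

text \<open>Iterated conjunction / disjunction of a nonempty list of formulas
  (given as head and tail).\<close>
fun conjs :: "('c, 'p, 'f) fm \<Rightarrow> ('c, 'p, 'f) fm list \<Rightarrow> ('c, 'p, 'f) fm" where
  "conjs a [] = a"
| "conjs a (b # bs) = And a (conjs b bs)"

fun disjs :: "('c, 'p, 'f) fm \<Rightarrow> ('c, 'p, 'f) fm list \<Rightarrow> ('c, 'p, 'f) fm" where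
  "disjs a [] = a"
| "disjs a (b # bs) = Or a (disjs b bs)"

definition bigAnd :: "('c, 'p, 'f) fm list \<Rightarrow> ('c, 'p, 'f) fm" where
  "bigAnd as = conjs (hd as) (tl as)"

definition bigOr :: "('c, 'p, 'f) fm list \<Rightarrow> ('c, 'p, 'f) fm" where
  "bigOr as = disjs (hd as) (tl as)"

definition closeAll :: "nat list \<Rightarrow> ('c, 'p, 'f) fm \<Rightarrow> ('c, 'p, 'f) fm" where
  "closeAll xs a = foldr All xs a"

text \<open>A finite L-lattice: the truth values form a finite lattice 'v (with
  join/meet interpreting Or/And); imp interprets the implication and ops c
  the further connective c.  Polarity: pol c i = True means '+' for the
  argument with 0-based index i.\<close>
definition L_lattice ::
  "('c \<Rightarrow> nat) \<Rightarrow> ('c \<Rightarrow> nat \<Rightarrow> bool) \<Rightarrow> ('c \<Rightarrow> 'v::{finite,complete_lattice} list \<Rightarrow> 'v)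
   \<Rightarrow> ('v \<Rightarrow> 'v \<Rightarrow> 'v) \<Rightarrow> bool" where
  "L_lattice ar pol ops imp \<longleftrightarrow>
     (\<forall>a b. top \<le> imp a b \<longleftrightarrow> a \<le> b) \<and>
     (\<forall>a a' b b'. a' \<le> a \<and> b \<le> b' \<longrightarrow> imp a b \<le> imp a' b') \<and>
     (\<forall>c xs ys. length xs = ar c \<and> length ys = ar c \<and>
        (\<forall>i < ar c. if pol c i then xs ! i \<le> ys ! i else ys ! i \<le> xs ! i)
        \<longrightarrow> ops c xs \<le> ops c ys)"

fun teval :: "('f \<Rightarrow> 'u list \<Rightarrow> 'u) \<Rightarrow> (nat \<Rightarrow> 'u) \<Rightarrow> 'f trm \<Rightarrow> 'u" where
  "teval F v (Var x) = v x"
| "teval F v (Fn f ts) = F f (map (teval F v) ts)"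

fun eval :: "('c \<Rightarrow> 'v::complete_lattice list \<Rightarrow> 'v) \<Rightarrow> ('v \<Rightarrow> 'v \<Rightarrow> 'v) \<Rightarrow>
    'u set \<Rightarrow> ('p \<Rightarrow> 'u list \<Rightarrow> 'v) \<Rightarrow> ('f \<Rightarrow> 'u list \<Rightarrow> 'u) \<Rightarrow> (nat \<Rightarrow> 'u) \<Rightarrow>
    ('c, 'p, 'f) fm \<Rightarrow> 'v" where
  "eval ops imp D P F v (Atom p ts) = P p (map (teval F v) ts)"
| "eval ops imp D P F v (Or a b) = sup (eval ops imp D P F v a) (eval ops imp D P F v b)"
| "eval ops imp D P F v (And a b) = inf (eval ops imp D P F v a) (eval ops imp D P F v b)"
| "eval ops imp D P F v (Imp a b) = imp (eval ops imp D P F v a) (eval ops imp D P F v b)"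
| "eval ops imp D P F v (Conn c as) = ops c (map (eval ops imp D P F v) as)"
| "eval ops imp D P F v (All x a) = Inf ((\<lambda>d. eval ops imp D P F (v(x := d)) a) ` D)"
| "eval ops imp D P F v (Ex x a) = Sup ((\<lambda>d. eval ops imp D P F (v(x := d)) a) ` D)"

definition is_struct :: "'u set \<Rightarrow> ('f \<Rightarrow> 'u list \<Rightarrow> 'u) \<Rightarrow> bool" where
  "is_struct D F \<longleftrightarrow> D \<noteq> {} \<and> (\<forall>f xs. set xs \<subseteq> D \<longrightarrow> F f xs \<in> D)"

text \<open>1-validity, relative to structures whose domain lives in type 'u.\<close>
definition valid :: "('c \<Rightarrow> 'v::complete_lattice list \<Rightarrow> 'v) \<Rightarrow> ('v \<Rightarrow> 'v \<Rightarrow> 'v) \<Rightarrow>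
    'u itself \<Rightarrow> ('c, 'p, 'f) fm \<Rightarrow> bool" where
  "valid ops imp U a \<longleftrightarrow>
     (\<forall>(D::'u set) P F v. is_struct D F \<and> range v \<subseteq> D \<longrightarrow> eval ops imp D P F v a = top)"

text \<open>C_1,...,C_n |=_1 C': validity of the universal closure of
  (C_1 /\ ... /\ C_n) -> C'; the meet of the premises is the lattice meet
  (top for n = 0).\<close>
definition entails :: "('c \<Rightarrow> 'v::complete_lattice list \<Rightarrow> 'v) \<Rightarrow> ('v \<Rightarrow> 'v \<Rightarrow> 'v) \<Rightarrow>
    'u itself \<Rightarrow> ('c, 'p, 'f) fm list \<Rightarrow> ('c, 'p, 'f) fm \<Rightarrow> bool" where
  "entails ops imp U Cs a \<longleftrightarrow>
     (\<forall>(D::'u set) P F v. is_struct D F \<and> range v \<subseteq> D \<longrightarrow>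
        imp (Inf ((\<lambda>C. eval ops imp D P F v C) ` set Cs)) (eval ops imp D P F v a) = top)"

datatype ('c, 'p, 'f) ctx =
    Hole
  | COrL "('c, 'p, 'f) ctx" "('c, 'p, 'f) fm"
  | COrR "('c, 'p, 'f) fm" "('c, 'p, 'f) ctx"
  | CAndL "('c, 'p, 'f) ctx" "('c, 'p, 'f) fm"
  | CAndR "('c, 'p, 'f) fm" "('c, 'p, 'f) ctx"
  | CImpL "('c, 'p, 'f) ctx" "('c, 'p, 'f) fm"
  | CImpR "('c, 'p, 'f) fm" "('c, 'p, 'f) ctx"
  | CConn 'c "('c, 'p, 'f) fm list" "('c, 'p, 'f) ctx" "('c, 'p, 'f) fm list"
  | CAll nat "('c, 'p, 'f) ctx"
  | CEx nat "('c, 'p, 'f) ctx"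

fun fill :: "('c, 'p, 'f) ctx \<Rightarrow> ('c, 'p, 'f) fm \<Rightarrow> ('c, 'p, 'f) fm" where
  "fill Hole b = b"
| "fill (COrL C a) b = Or (fill C b) a"
| "fill (COrR a C) b = Or a (fill C b)"
| "fill (CAndL C a) b = And (fill C b) a"
| "fill (CAndR a C) b = And a (fill C b)"
| "fill (CImpL C a) b = Imp (fill C b) a"
| "fill (CImpR a C) b = Imp a (fill C b)"
| "fill (CConn c l C r) b = Conn c (l @ [fill C b] @ r)"
| "fill (CAll x C) b = All x (fill C b)"
| "fill (CEx x C) b = Ex x (fill C b)"

text \<open>Polarity of the hole (True = positive).\<close>
fun cpol :: "('c \<Rightarrow> nat \<Rightarrow> bool) \<Rightarrow> ('c, 'p, 'f) ctx \<Rightarrow> bool" where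
  "cpol pol Hole = True"
| "cpol pol (COrL C a) = cpol pol C"
| "cpol pol (COrR a C) = cpol pol C"
| "cpol pol (CAndL C a) = cpol pol C"
| "cpol pol (CAndR a C) = cpol pol C"
| "cpol pol (CImpL C a) = (\<not> cpol pol C)"
| "cpol pol (CImpR a C) = cpol pol C"
| "cpol pol (CConn c l C r) = (pol c (length l) = cpol pol C)"
| "cpol pol (CAll x C) = cpol pol C"
| "cpol pol (CEx x C) = cpol pol C"

fun cbound :: "('c, 'p, 'f) ctx \<Rightarrow> nat set" where
  "cbound Hole = {}"
| "cbound (COrL C a) = cbound C"
| "cbound (COrR a C) = cbound C"
| "cbound (CAndL C a) = cbound C"
| "cbound (CAndR a C) = cbound C"
| "cbound (CImpL C a) = cbound C"
| "cbound (CImpR a C) = cbound C"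
| "cbound (CConn c l C r) = cbound C"
| "cbound (CAll x C) = insert x (cbound C)"
| "cbound (CEx x C) = insert x (cbound C)"

text \<open>sk pol W nf p q B: skolemize all strong quantifier occurrences of B,
  where p is the polarity of B (in the whole formula) and q the position of B
  (path of argument indices).  The occurrence at position q uses the new
  function symbols nf q 0, ..., nf q (W - 1); the arguments of a Skolem term
  are the free variables of the (already skolemized) quantified subformula.\<close>
fun sk :: "('c \<Rightarrow> nat \<Rightarrow> bool) \<Rightarrow> nat \<Rightarrow> (nat list \<Rightarrow> nat \<Rightarrow> 'f) \<Rightarrow> bool \<Rightarrow> nat list \<Rightarrow>
    ('c, 'p, 'f) fm \<Rightarrow> ('c, 'p, 'f) fm"
and sks :: "('c \<Rightarrow> nat \<Rightarrow> bool) \<Rightarrow> nat \<Rightarrow> (nat list \<Rightarrow> nat \<Rightarrow> 'f) \<Rightarrow> bool \<Rightarrow> nat list \<Rightarrow>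
    'c \<Rightarrow> nat \<Rightarrow> ('c, 'p, 'f) fm list \<Rightarrow> ('c, 'p, 'f) fm list" where
  "sk pol W nf p q (Atom P ts) = Atom P ts"
| "sk pol W nf p q (Or a b) = Or (sk pol W nf p (q @ [0]) a) (sk pol W nf p (q @ [1]) b)"
| "sk pol W nf p q (And a b) = And (sk pol W nf p (q @ [0]) a) (sk pol W nf p (q @ [1]) b)"
| "sk pol W nf p q (Imp a b) = Imp (sk pol W nf (\<not> p) (q @ [0]) a) (sk pol W nf p (q @ [1]) b)"
| "sk pol W nf p q (Conn c as) = Conn c (sks pol W nf p q c 0 as)"
| "sk pol W nf p q (All x a) =
     (let a' = sk pol W nf p (q @ [0]) a;
          xs = sorted_list_of_set (fv (All x a'))
      in if p then bigAnd (map (\<lambda>i. subst1 x (Fn (nf q i) (map Var xs)) a') [0..<W])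
         else All x a')"
| "sk pol W nf p q (Ex x a) =
     (let a' = sk pol W nf p (q @ [0]) a;
          xs = sorted_list_of_set (fv (Ex x a'))
      in if \<not> p then bigOr (map (\<lambda>i. subst1 x (Fn (nf q i) (map Var xs)) a') [0..<W])
         else Ex x a')"
| "sks pol W nf p q c i [] = []"
| "sks pol W nf p q c i (a # as) =
     sk pol W nf (pol c i = p) (q @ [i]) a # sks pol W nf p q c (Suc i) as"

fun spos :: "('c \<Rightarrow> nat \<Rightarrow> bool) \<Rightarrow> bool \<Rightarrow> nat list \<Rightarrow> ('c, 'p, 'f) fm \<Rightarrow> nat list set"
and sposs :: "('c \<Rightarrow> nat \<Rightarrow> bool) \<Rightarrow> bool \<Rightarrow> nat list \<Rightarrow> 'c \<Rightarrow> nat \<Rightarrow>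
    ('c, 'p, 'f) fm list \<Rightarrow> nat list set" where
  "spos pol p q (Atom P ts) = {}"
| "spos pol p q (Or a b) = spos pol p (q @ [0]) a \<union> spos pol p (q @ [1]) b"
| "spos pol p q (And a b) = spos pol p (q @ [0]) a \<union> spos pol p (q @ [1]) b"
| "spos pol p q (Imp a b) = spos pol (\<not> p) (q @ [0]) a \<union> spos pol p (q @ [1]) b"
| "spos pol p q (Conn c as) = sposs pol p q c 0 as"
| "spos pol p q (All x a) = (if p then {q} else {}) \<union> spos pol p (q @ [0]) a"
| "spos pol p q (Ex x a) = (if \<not> p then {q} else {}) \<union> spos pol p (q @ [0]) a"
| "sposs pol p q c i [] = {}"
| "sposs pol p q c i (a # as) = spos pol (pol c i = p) (q @ [i]) a \<union> sposs pol p q c (Suc i) as"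

definition is_skax :: "nat \<Rightarrow> ('c, 'p, 'f) fm \<Rightarrow> 'f list \<Rightarrow> bool" where
  "is_skax W S fs \<longleftrightarrow>
     (\<exists>A y xs. length fs = W \<and> distinct fs \<and> set fs \<inter> funs A = {} \<and>
        distinct xs \<and> y \<notin> set xs \<and> fv A \<subseteq> insert y (set xs) \<and>
        (S = closeAll xs (Imp (Ex y A)
               (bigOr (map (\<lambda>f. subst1 y (Fn f (map Var xs)) A) fs))) \<or>
         S = closeAll xs (Imp (bigAnd (map (\<lambda>f. subst1 y (Fn f (map Var xs)) A) fs))
               (All y A))))"

definition skax_seq :: "nat \<Rightarrow> ('c, 'p, 'f) fm list \<Rightarrow> 'f list list \<Rightarrow> bool" where
  "skax_seq W Ss Fs \<longleftrightarrow> length Ss = length Fs \<and>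
     (\<forall>j < length Ss. is_skax W (Ss ! j) (Fs ! j) \<and>
        (\<forall>j' < j. set (Fs ! j) \<inter> funs (Ss ! j') = {}))"

end

theory Submission
  imports Defs "HOL-Library.Sublist"
begin

text \<open>
  Skolemizing a strong quantifier occurrence with |W| function symbols is sound by monotonicity:
  each instance C(f_i(x)) is one of the values over which the quantifier ranges, so sk(B) moves
  away from B in the direction given by its polarity, and the context A(\<circ>) transports this.

  Conversely, C takes at most |W| truth values; so for every choice of the remaining variables
  |W| witnesses already realise all values C(d), and interpreting the Skolem functions by such
  witnesses makes every Skolem axiom true in any structure, without touching the other symbols.
  This gives (3), and since under the axioms sk(B) and B have the same value, also (2).
\<close>

section \<open>Coincidence and substitution\<close>

lemma finite_fvt [simp]: "finite (fvt t)"
  by (induction t) auto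

lemma finite_fv [simp]: "finite (fv a)"
  by (induction a) auto

lemma teval_cong_fvt: "\<forall>z\<in>fvt t. v z = v' z \<Longrightarrow> teval F v t = teval F v' t"
  by (induction t) (auto cong: map_cong)

lemma eval_cong_fv:
  "\<forall>z\<in>fv a. v z = v' z \<Longrightarrow> eval ops imp D P F v a = eval ops imp D P F v' a"
proof (induction a arbitrary: v v')
  case (Atom p ts)
  then show ?case by (auto intro!: arg_cong[where f = "P p"] teval_cong_fvt)
next
  case (Conn c as)
  then show ?case by (auto intro!: arg_cong[where f = "ops c"])
qed (auto intro!: arg_cong2[where f = sup] arg_cong2[where f = inf] arg_cong2[where f = imp]
                  arg_cong[where f = Inf] arg_cong[where f = Sup] image_cong)

lemma teval_cong_funst: "\<forall>f\<in>funst t. F f = F' f \<Longrightarrow> teval F v t = teval F' v t"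
  by (induction t) (auto cong: map_cong)

lemma eval_cong_funs:
  "\<forall>f\<in>funs a. F f = F' f \<Longrightarrow> eval ops imp D P F v a = eval ops imp D P F' v a"
proof (induction a arbitrary: v)
  case (Atom p ts)
  then show ?case by (auto intro!: arg_cong[where f = "P p"] teval_cong_funst)
next
  case (Conn c as)
  then show ?case by (auto intro!: arg_cong[where f = "ops c"])
qed (auto intro!: arg_cong2[where f = sup] arg_cong2[where f = inf] arg_cong2[where f = imp]
                  arg_cong[where f = Inf] arg_cong[where f = Sup] image_cong)

lemma teval_substt: "teval F v (substt s t) = teval F (\<lambda>z. teval F v (s z)) t"
  by (induction t) (auto cong: map_cong)

lemma fresh_var_notin: "finite S \<Longrightarrow> fresh_var S y \<notin> S"
proof -
  assume "finite S"
  then have "Suc (Max S) \<notin> S" using Max_ge Suc_n_not_le_n by blast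
  then show ?thesis by (simp add: fresh_var_def)
qed

lemma teval_rename_bound:
  assumes "y' \<notin> (\<Union>z\<in>fv a - {y}. fvt (s z))" and "z \<in> fv a"
  shows "teval F (v(y' := d)) ((s(y := Var y')) z) = ((\<lambda>z. teval F v (s z))(y := d)) z"
  using assms by (cases "z = y") (auto intro!: teval_cong_fvt)

lemma eval_subst_bound:
  assumes "y' \<notin> (\<Union>z\<in>fv a - {y}. fvt (s z))"
    and IH: "\<And>v. eval ops imp D P F v (subst (s(y := Var y')) a)
                 = eval ops imp D P F (\<lambda>z. teval F v ((s(y := Var y')) z)) a"
  shows "eval ops imp D P F (v(y' := d)) (subst (s(y := Var y')) a)
       = eval ops imp D P F ((\<lambda>z. teval F v (s z))(y := d)) a"
  unfolding IH using assms(1) by (intro eval_cong_fv ballI teval_rename_bound)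

lemma eval_subst:
  "eval ops imp D P F v (subst s a) = eval ops imp D P F (\<lambda>z. teval F v (s z)) a"
proof (induction a arbitrary: s v)
  case (All y a)
  define y' where "y' = fresh_var (\<Union>z\<in>fv (All y a). fvt (s z)) y"
  have "y' \<notin> (\<Union>z\<in>fv a - {y}. fvt (s z))"
    using fresh_var_notin[of "\<Union>z\<in>fv (All y a). fvt (s z)"] by (simp add: y'_def)
  note body = eval_subst_bound[OF this All.IH]
  have "subst s (All y a) = All y' (subst (s(y := Var y')) a)"
    by (simp add: y'_def Let_def)
  then show ?case by (simp only: eval.simps body)
next
  case (Ex y a)
  define y' where "y' = fresh_var (\<Union>z\<in>fv (Ex y a). fvt (s z)) y"
  have "y' \<notin> (\<Union>z\<in>fv a - {y}. fvt (s z))"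
    using fresh_var_notin[of "\<Union>z\<in>fv (Ex y a). fvt (s z)"] by (simp add: y'_def)
  note body = eval_subst_bound[OF this Ex.IH]
  have "subst s (Ex y a) = Ex y' (subst (s(y := Var y')) a)"
    by (simp add: y'_def Let_def)
  then show ?case by (simp only: eval.simps body)
qed (simp_all add: teval_substt comp_def cong: map_cong)

lemma eval_subst1:
  "eval ops imp D P F v (subst1 x t a) = eval ops imp D P F (v(x := teval F v t)) a"
  unfolding subst1_def eval_subst by (rule eval_cong_fv) auto

lemma funst_substt: "funst (substt s t) \<subseteq> funst t \<union> (\<Union>z. funst (s z))"
  by (induction t) auto

lemma funs_subst: "funs (subst s a) \<subseteq> funs a \<union> (\<Union>z. funst (s z))"
proof (induction a arbitrary: s)
  case (Atom p ts)
  then show ?case using funst_substt by fastforce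
next
  case (All y a)
  then show ?case by (fastforce simp: Let_def split: if_splits)
next
  case (Ex y a)
  then show ?case by (fastforce simp: Let_def split: if_splits)
qed fastforce+

lemma funs_subst1_Fn: "funs (subst1 x (Fn f (map Var xs)) a) \<subseteq> insert f (funs a)"
proof -
  have "(\<Union>z. funst ((Var(x := Fn f (map Var xs))) z)) \<subseteq> {f}"
    by (auto split: if_splits)
  then show ?thesis
    unfolding subst1_def using funs_subst[of "Var(x := Fn f (map Var xs))" a] by blast
qed

lemma eval_conjs:
  "eval ops imp D P F v (conjs a bs) = Inf (eval ops imp D P F v ` set (a # bs))"
  by (induction bs arbitrary: a) auto

lemma eval_disjs:
  "eval ops imp D P F v (disjs a bs) = Sup (eval ops imp D P F v ` set (a # bs))"
  by (induction bs arbitrary: a) auto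

lemma eval_bigAnd: "as \<noteq> [] \<Longrightarrow> eval ops imp D P F v (bigAnd as) = Inf (eval ops imp D P F v ` set as)"
  unfolding bigAnd_def by (cases as) (auto simp: eval_conjs)

lemma eval_bigOr: "as \<noteq> [] \<Longrightarrow> eval ops imp D P F v (bigOr as) = Sup (eval ops imp D P F v ` set as)"
  unfolding bigOr_def by (cases as) (auto simp: eval_disjs)

lemma funs_conjs: "funs (conjs a bs) = funs a \<union> (\<Union>b\<in>set bs. funs b)"
  by (induction bs arbitrary: a) auto

lemma funs_bigAnd: "as \<noteq> [] \<Longrightarrow> funs (bigAnd as) = (\<Union>a\<in>set as. funs a)"
  unfolding bigAnd_def by (cases as) (auto simp: funs_conjs)

lemma funs_disjs: "funs (disjs a bs) = funs a \<union> (\<Union>b\<in>set bs. funs b)"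
  by (induction bs arbitrary: a) auto

lemma funs_bigOr: "as \<noteq> [] \<Longrightarrow> funs (bigOr as) = (\<Union>a\<in>set as. funs a)"
  unfolding bigOr_def by (cases as) (auto simp: funs_disjs)

lemma funs_closeAll [simp]: "funs (closeAll xs a) = funs a"
  unfolding closeAll_def by (induction xs) auto

lemma eval_closeAll_topD:
  "eval ops imp D P F v (closeAll xs a) = top \<Longrightarrow> range v \<subseteq> D \<Longrightarrow> eval ops imp D P F v a = top"
proof (induction xs arbitrary: v)
  case (Cons x xs)
  have "v x \<in> D" using Cons.prems(2) by auto
  with Cons.prems(1) have "eval ops imp D P F v (closeAll xs a) = top"
    by (auto simp: closeAll_def dest: bspec[where x = "v x"])
  with Cons.IH Cons.prems(2) show ?case by simp
qed (simp add: closeAll_def)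

lemma eval_closeAll_topI:
  "(\<And>v'. range v' \<subseteq> D \<Longrightarrow> eval ops imp D P F v' a = top) \<Longrightarrow> range v \<subseteq> D \<Longrightarrow>
   eval ops imp D P F v (closeAll xs a) = top"
proof (induction xs arbitrary: v)
  case (Cons x xs)
  then have "eval ops imp D P F (v(x := d)) (closeAll xs a) = top" if "d \<in> D" for d
    using that by (auto intro!: Cons.IH)
  then show ?case by (auto simp: closeAll_def)
qed (simp add: closeAll_def)

section \<open>Polarity and monotonicity\<close>

definition pol_le :: "bool \<Rightarrow> 'a::order \<Rightarrow> 'a \<Rightarrow> bool" where
  "pol_le p x y \<longleftrightarrow> (if p then x \<le> y else y \<le> x)"

lemma L_lattice_imp_top_iff: "L_lattice ar pol ops imp \<Longrightarrow> imp a b = top \<longleftrightarrow> a \<le> b"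
  unfolding L_lattice_def by (metis top.extremum_unique)

lemma L_lattice_imp_mono:
  "L_lattice ar pol ops imp \<Longrightarrow> a' \<le> a \<Longrightarrow> b \<le> b' \<Longrightarrow> imp a b \<le> imp a' b'"
  unfolding L_lattice_def by blast

lemma L_lattice_ops_mono:
  "L_lattice ar pol ops imp \<Longrightarrow> length xs = ar c \<Longrightarrow> length ys = ar c \<Longrightarrow>
   (\<And>i. i < ar c \<Longrightarrow> pol_le (pol c i) (xs ! i) (ys ! i)) \<Longrightarrow> ops c xs \<le> ops c ys"
  unfolding L_lattice_def pol_le_def by blast

lemma pol_le_refl [simp]: "pol_le p x x"
  by (simp add: pol_le_def)

lemma pol_le_Not: "pol_le (\<not> p) x y \<longleftrightarrow> pol_le p y x"
  by (simp add: pol_le_def)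

lemma L_lattice_ops_mono_at:
  assumes lat: "L_lattice ar pol ops imp" and len: "length l + Suc (length r) = ar c"
    and "pol_le (pol c (length l)) x y"
  shows "ops c (l @ [x] @ r) \<le> ops c (l @ [y] @ r)"
proof (rule L_lattice_ops_mono[OF lat])
  fix i assume "i < ar c"
  with assms(3) show "pol_le (pol c i) ((l @ [x] @ r) ! i) ((l @ [y] @ r) ! i)"
    by (cases "i < length l") (auto simp: nth_append nth_Cons split: nat.split)
qed (use len in simp_all)

fun cwf :: "('c \<Rightarrow> nat) \<Rightarrow> ('c, 'p, 'f) ctx \<Rightarrow> bool" where
  "cwf ar Hole = True"
| "cwf ar (COrL C a) = cwf ar C"
| "cwf ar (COrR a C) = cwf ar C"
| "cwf ar (CAndL C a) = cwf ar C"
| "cwf ar (CAndR a C) = cwf ar C"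
| "cwf ar (CImpL C a) = cwf ar C"
| "cwf ar (CImpR a C) = cwf ar C"
| "cwf ar (CConn c l C r) = (length l + Suc (length r) = ar c \<and> cwf ar C)"
| "cwf ar (CAll x C) = cwf ar C"
| "cwf ar (CEx x C) = cwf ar C"

lemma wf_fillD: "wf ar (fill C X) \<Longrightarrow> cwf ar C \<and> wf ar X"
  by (induction C) auto

lemma funs_fill: "funs X \<subseteq> funs (fill C X)"
  by (induction C) auto

lemma eval_fill_cong:
  assumes "\<And>v. range v \<subseteq> D \<Longrightarrow> eval ops imp D P F v X = eval ops imp D P F v Y"
  shows "range v \<subseteq> D \<Longrightarrow> eval ops imp D P F v (fill C X) = eval ops imp D P F v (fill C Y)"
proof (induction C arbitrary: v)
  case (CAll x C)
  then show ?case by (auto intro!: arg_cong[where f = Inf] image_cong CAll.IH)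
next
  case (CEx x C)
  then show ?case by (auto intro!: arg_cong[where f = Sup] image_cong CEx.IH)
qed (use assms in auto)

lemma eval_fill_mono:
  assumes lat: "L_lattice ar pol ops imp"
  shows "cwf ar C \<Longrightarrow>
    (\<And>v. range v \<subseteq> D \<Longrightarrow> pol_le (cpol pol C) (eval ops imp D P F v X) (eval ops imp D P F v Y)) \<Longrightarrow>
    range v \<subseteq> D \<Longrightarrow> eval ops imp D P F v (fill C X) \<le> eval ops imp D P F v (fill C Y)"
proof (induction C arbitrary: X Y v)
  case (CImpL C a)
  have "eval ops imp D P F v (fill C Y) \<le> eval ops imp D P F v (fill C X)"
    using CImpL.prems by (intro CImpL.IH) (auto simp: pol_le_Not)
  then show ?case using L_lattice_imp_mono[OF lat] by simp
next
  case (CImpR a C)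
  then show ?case using L_lattice_imp_mono[OF lat] by simp
next
  case (CConn c l C r)
  then have "pol_le (pol c (length l)) (eval ops imp D P F v (fill C X)) (eval ops imp D P F v (fill C Y))"
    by (cases "pol c (length l)") (simp_all add: pol_le_def)
  with CConn.prems(1) show ?case
    using L_lattice_ops_mono_at[OF lat, of "map (eval ops imp D P F v) l" "map (eval ops imp D P F v) r"]
    by simp
next
  case (CAll x C)
  have "eval ops imp D P F (v(x := d)) (fill C X) \<le> eval ops imp D P F (v(x := d)) (fill C Y)"
    if "d \<in> D" for d
    using CAll.prems that by (intro CAll.IH) auto
  then show ?case by (auto intro!: INF_mono)
next
  case (CEx x C)
  have "eval ops imp D P F (v(x := d)) (fill C X) \<le> eval ops imp D P F (v(x := d)) (fill C Y)"
    if "d \<in> D" for d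
    using CEx.prems that by (intro CEx.IH) auto
  then show ?case by (auto intro!: SUP_mono)
next
  case Hole
  then show ?case by (simp add: pol_le_def)
next
  case (COrL C a)
  then have "eval ops imp D P F v (fill C X) \<le> eval ops imp D P F v (fill C Y)" by simp
  then show ?case by (simp add: le_supI1)
next
  case (COrR a C)
  then have "eval ops imp D P F v (fill C X) \<le> eval ops imp D P F v (fill C Y)" by simp
  then show ?case by (simp add: le_supI2)
next
  case (CAndL C a)
  then have "eval ops imp D P F v (fill C X) \<le> eval ops imp D P F v (fill C Y)" by simp
  then show ?case by (simp add: le_infI1)
next
  case (CAndR a C)
  then have "eval ops imp D P F v (fill C X) \<le> eval ops imp D P F v (fill C Y)" by simp
  then show ?case by (simp add: le_infI2)
qed

lemma L_lattice_ops_pol_le: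
  assumes lat: "L_lattice ar pol ops imp" and "length xs = ar c" and "length ys = ar c"
    and "\<And>i. i < ar c \<Longrightarrow> pol_le (pol c i = p) (xs ! i) (ys ! i)"
  shows "pol_le p (ops c xs) (ops c ys)"
  using assms L_lattice_ops_mono[OF lat, of xs c ys] L_lattice_ops_mono[OF lat, of ys c xs]
  by (cases p) (simp_all add: pol_le_def)

lemma L_lattice_imp_pol_le:
  "L_lattice ar pol ops imp \<Longrightarrow> pol_le (\<not> p) a a' \<Longrightarrow> pol_le p b b' \<Longrightarrow>
   pol_le p (imp a b) (imp a' b')"
  by (cases p) (simp_all add: pol_le_def L_lattice_imp_mono)

lemma sup_pol_le: "pol_le p (a::'a::lattice) a' \<Longrightarrow> pol_le p b b' \<Longrightarrow> pol_le p (sup a b) (sup a' b')"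
  by (cases p) (auto simp: pol_le_def intro: le_supI1 le_supI2)

lemma inf_pol_le: "pol_le p (a::'a::lattice) a' \<Longrightarrow> pol_le p b b' \<Longrightarrow> pol_le p (inf a b) (inf a' b')"
  by (cases p) (auto simp: pol_le_def intro: le_infI1 le_infI2)

definition skolem_insts :: "nat \<Rightarrow> 'f list \<Rightarrow> nat list \<Rightarrow> ('c, 'p, 'f) fm \<Rightarrow> ('c, 'p, 'f) fm list" where
  "skolem_insts y fs xs A = map (\<lambda>f. subst1 y (Fn f (map Var xs)) A) fs"

lemma skolem_insts_Nil_iff [simp]: "skolem_insts y fs xs A = [] \<longleftrightarrow> fs = []"
  by (simp add: skolem_insts_def)

lemma eval_skolem_insts:
  "eval ops imp D P F v ` set (skolem_insts y fs xs A)
   = (\<lambda>f. eval ops imp D P F (v(y := F f (map v xs))) A) ` set fs"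
  by (simp add: skolem_insts_def image_image eval_subst1 comp_def)

lemma funs_skolem_insts: "a \<in> set (skolem_insts y fs xs A) \<Longrightarrow> funs a \<subseteq> funs A \<union> set fs"
  unfolding skolem_insts_def using funs_subst1_Fn by fastforce

lemma funs_bigAnd_skolem_insts:
  "fs \<noteq> [] \<Longrightarrow> funs (bigAnd (skolem_insts y fs xs A)) \<subseteq> funs A \<union> set fs"
  by (auto simp: funs_bigAnd dest!: funs_skolem_insts)

lemma funs_bigOr_skolem_insts:
  "fs \<noteq> [] \<Longrightarrow> funs (bigOr (skolem_insts y fs xs A)) \<subseteq> funs A \<union> set fs"
  by (auto simp: funs_bigOr dest!: funs_skolem_insts)

lemma range_fun_upd_subset: "range v \<subseteq> D \<Longrightarrow> d \<in> D \<Longrightarrow> range (v(x := d)) \<subseteq> D"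
  by auto

lemma struct_apply_in_domain:
  assumes "is_struct D F" and "range v \<subseteq> D"
  shows "F f (map v xs) \<in> D"
proof -
  have "set (map v xs) \<subseteq> D" using assms(2) by auto
  with assms(1) show ?thesis unfolding is_struct_def by blast
qed

lemma eval_All_le_skolem_insts:
  assumes "is_struct D F" and "range v \<subseteq> D" and "fs \<noteq> []"
  shows "eval ops imp D P F v (All y A) \<le> eval ops imp D P F v (bigAnd (skolem_insts y fs xs A))"
proof -
  have "eval ops imp D P F v (All y A) \<le> eval ops imp D P F (v(y := F f (map v xs))) A" for f
    using struct_apply_in_domain[OF assms(1,2)] by (auto intro: INF_lower)
  then show ?thesis using assms(3) by (simp add: eval_bigAnd eval_skolem_insts le_INF_iff)
qed

lemma eval_skolem_insts_le_Ex:
  assumes "is_struct D F" and "range v \<subseteq> D" and "fs \<noteq> []"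
  shows "eval ops imp D P F v (bigOr (skolem_insts y fs xs A)) \<le> eval ops imp D P F v (Ex y A)"
proof -
  have "eval ops imp D P F (v(y := F f (map v xs))) A \<le> eval ops imp D P F v (Ex y A)" for f
    using struct_apply_in_domain[OF assms(1,2)] by (auto intro: SUP_upper)
  then show ?thesis using assms(3) by (simp add: eval_bigOr eval_skolem_insts SUP_le_iff)
qed

lemma sk_All_strong:
  "p \<Longrightarrow> sk pol W nf p q (All x a) =
     bigAnd (skolem_insts x (map (nf q) [0..<W]) (sorted_list_of_set (fv (All x (sk pol W nf p (q @ [0]) a))))
       (sk pol W nf p (q @ [0]) a))"
  by (simp add: skolem_insts_def Let_def comp_def)

lemma sk_Ex_strong:
  "\<not> p \<Longrightarrow> sk pol W nf p q (Ex x a) =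
     bigOr (skolem_insts x (map (nf q) [0..<W]) (sorted_list_of_set (fv (Ex x (sk pol W nf p (q @ [0]) a))))
       (sk pol W nf p (q @ [0]) a))"
  by (simp add: skolem_insts_def Let_def comp_def)

lemma sk_All_weak: "\<not> p \<Longrightarrow> sk pol W nf p q (All x a) = All x (sk pol W nf p (q @ [0]) a)"
  by (simp add: Let_def)

lemma sk_Ex_weak: "p \<Longrightarrow> sk pol W nf p q (Ex x a) = Ex x (sk pol W nf p (q @ [0]) a)"
  by (simp add: Let_def)

lemma length_sks [simp]: "length (sks pol W nf p q c i as) = length as"
  by (induction as arbitrary: i) auto

lemma nth_sks:
  "k < length as \<Longrightarrow> sks pol W nf p q c i as ! k = sk pol W nf (pol c (i + k) = p) (q @ [i + k]) (as ! k)"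
proof (induction as arbitrary: i k)
  case (Cons a as)
  then show ?case by (cases k) auto
qed simp

section \<open>Soundness of skolemization\<close>

lemma eval_sk_pol_le:
  assumes lat: "L_lattice ar pol ops imp" and st: "is_struct D F" and W: "W > 0"
  shows "wf ar B \<Longrightarrow> range v \<subseteq> D \<Longrightarrow>
    pol_le p (eval ops imp D P F v B) (eval ops imp D P F v (sk pol W nf p q B))"
proof (induction B arbitrary: p q v)
  case (Or a b)
  then show ?case by (simp add: sup_pol_le)
next
  case (And a b)
  then show ?case by (simp add: inf_pol_le)
next
  case (Imp a b)
  then show ?case by (auto intro!: L_lattice_imp_pol_le[OF lat])
next
  case (Conn c as)
  let ?e = "eval ops imp D P F v"
  have len: "length as = ar c" and wfs: "\<And>i. i < ar c \<Longrightarrow> wf ar (as ! i)"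
    using Conn.prems(1) by (auto simp: list_all_length)
  have "pol_le (pol c i = p) (map ?e as ! i) (map ?e (sks pol W nf p q c 0 as) ! i)"
    if i: "i < ar c" for i
  proof -
    have "as ! i \<in> set as" using i len by simp
    from Conn.IH[OF this wfs[OF i] Conn.prems(2)] show ?thesis using i len by (simp add: nth_sks)
  qed
  with len show ?case by (simp add: L_lattice_ops_pol_le[OF lat])
next
  case (All x a)
  let ?a' = "sk pol W nf p (q @ [0]) a"
  have IH: "pol_le p (eval ops imp D P F (v(x := d)) a) (eval ops imp D P F (v(x := d)) ?a')"
    if "d \<in> D" for d
    using All.prems that by (intro All.IH) auto
  show ?case
  proof (cases p)
    case True
    with IH have "eval ops imp D P F v (All x a) \<le> eval ops imp D P F v (All x ?a')"
      by (auto simp: pol_le_def intro!: INF_mono)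
    also have "\<dots> \<le> eval ops imp D P F v (sk pol W nf p q (All x a))"
      unfolding sk_All_strong[OF True] using st All.prems W by (intro eval_All_le_skolem_insts) auto
    finally show ?thesis using True by (simp add: pol_le_def)
  next
    case False
    with IH show ?thesis by (auto simp: sk_All_weak pol_le_def intro!: INF_mono)
  qed
next
  case (Ex x a)
  let ?a' = "sk pol W nf p (q @ [0]) a"
  have IH: "pol_le p (eval ops imp D P F (v(x := d)) a) (eval ops imp D P F (v(x := d)) ?a')"
    if "d \<in> D" for d
    using Ex.prems that by (intro Ex.IH) auto
  show ?case
  proof (cases p)
    case False
    have "eval ops imp D P F v (sk pol W nf p q (Ex x a)) \<le> eval ops imp D P F v (Ex x ?a')"
      unfolding sk_Ex_strong[OF False] using st Ex.prems W by (intro eval_skolem_insts_le_Ex) auto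
    also have "\<dots> \<le> eval ops imp D P F v (Ex x a)"
      using IH False by (auto simp: pol_le_def intro!: SUP_mono)
    finally show ?thesis using False by (simp add: pol_le_def)
  next
    case True
    with IH show ?thesis by (auto simp: sk_Ex_weak pol_le_def intro!: SUP_mono)
  qed
qed simp

lemma valid_fill_sk:
  fixes B :: "('c, 'p, 'f) fm" and ops :: "'c \<Rightarrow> 'v::{finite,complete_lattice} list \<Rightarrow> 'v"
  assumes lat: "L_lattice ar pol ops imp" and wf: "wf ar (fill C B)" and W: "W > 0"
    and valid: "valid ops imp TYPE('u) (fill C B)"
  shows "valid ops imp TYPE('u) (fill C (sk pol W nf (cpol pol C) q B))"
  unfolding valid_def
proof (intro allI impI)
  fix D :: "'u set" and P :: "'p \<Rightarrow> 'u list \<Rightarrow> 'v" and F :: "'f \<Rightarrow> 'u list \<Rightarrow> 'u"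
    and v :: "nat \<Rightarrow> 'u"
  assume struct: "is_struct D F \<and> range v \<subseteq> D"
  have "eval ops imp D P F v (fill C B) \<le> eval ops imp D P F v (fill C (sk pol W nf (cpol pol C) q B))"
    using wf_fillD[OF wf] struct
    by (intro eval_fill_mono[OF lat] eval_sk_pol_le[OF lat _ W]) auto
  moreover have "eval ops imp D P F v (fill C B) = top"
    using valid struct unfolding valid_def by blast
  ultimately show "eval ops imp D P F v (fill C (sk pol W nf (cpol pol C) q B)) = top"
    by (simp add: top_unique)
qed

section \<open>Skolem axioms are conservative\<close>

lemma ex_witnesses_for_image:
  assumes "finite I" and "d0 \<in> D" and "finite (h ` D)" and "card (h ` D) \<le> card I"
  shows "\<exists>g. g ` I \<subseteq> D \<and> h ` g ` I = h ` D"
proof -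
  obtain e where e: "e ` h ` D \<subseteq> I" "inj_on e (h ` D)"
    using card_le_inj[OF assms(3,1,4)] by blast
  define g where "g i = inv_into D h (if i \<in> e ` h ` D then inv_into (h ` D) e i else h d0)" for i
  have "(if i \<in> e ` h ` D then inv_into (h ` D) e i else h d0) \<in> h ` D" for i
    using assms(2) by (simp add: inv_into_into)
  then have gD: "g i \<in> D" for i
    unfolding g_def by (rule inv_into_into)
  have hg: "h (g (e t)) = t" if t: "t \<in> h ` D" for t
  proof -
    have "inv_into (h ` D) e (e t) = t" using e(2) t by (rule inv_into_f_f)
    with t show ?thesis unfolding g_def by (simp add: f_inv_into_f)
  qed
  have "h ` D \<subseteq> h ` g ` I"
  proof
    fix t assume t: "t \<in> h ` D"
    then have "e t \<in> I" using e(1) by blast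
    then show "t \<in> h ` g ` I" using hg[OF t] by (metis imageI)
  qed
  moreover have "g ` I \<subseteq> D" using gD by blast
  ultimately show ?thesis by (intro exI[of _ g]) blast
qed

lemma eval_skax_top:
  assumes lat: "L_lattice ar pol ops imp" and fs: "fs \<noteq> []"
    and S: "S = closeAll xs (Imp (Ex y A) (bigOr (skolem_insts y fs xs A))) \<or>
            S = closeAll xs (Imp (bigAnd (skolem_insts y fs xs A)) (All y A))"
    and cover: "\<And>v. range v \<subseteq> D \<Longrightarrow>
      (\<lambda>f. eval ops imp D P F (v(y := F f (map v xs))) A) ` set fs
      = (\<lambda>d. eval ops imp D P F (v(y := d)) A) ` D"
    and v: "range v \<subseteq> D"
  shows "eval ops imp D P F v S = top"
proof -
  have "eval ops imp D P F w (bigOr (skolem_insts y fs xs A)) = eval ops imp D P F w (Ex y A)"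
    and "eval ops imp D P F w (bigAnd (skolem_insts y fs xs A)) = eval ops imp D P F w (All y A)"
    if "range w \<subseteq> D" for w
    using cover[OF that] fs by (simp_all add: eval_bigOr eval_bigAnd eval_skolem_insts)
  then have "eval ops imp D P F w (Imp (Ex y A) (bigOr (skolem_insts y fs xs A))) = top"
    and "eval ops imp D P F w (Imp (bigAnd (skolem_insts y fs xs A)) (All y A)) = top"
    if "range w \<subseteq> D" for w
    using that by (simp_all add: L_lattice_imp_top_iff[OF lat])
  with S v show ?thesis by (auto intro: eval_closeAll_topI)
qed

lemma ex_skolem_interpretation:
  fixes ops :: "'c \<Rightarrow> 'v::{finite,complete_lattice} list \<Rightarrow> 'v" and D :: "'u set"
    and F :: "'f \<Rightarrow> 'u list \<Rightarrow> 'u" and A :: "('c, 'p, 'f) fm"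
  assumes st: "is_struct D F" and dist: "distinct fs" and len: "card (UNIV :: 'v set) \<le> length fs"
    and disj: "set fs \<inter> funs A = {}" and fvA: "fv A \<subseteq> insert y (set xs)"
  obtains F' where "is_struct D F'" and "\<And>f. f \<notin> set fs \<Longrightarrow> F' f = F f"
    and "\<And>v. range v \<subseteq> D \<Longrightarrow> (\<lambda>f. eval ops imp D P F' (v(y := F' f (map v xs))) A) ` set fs
                              = (\<lambda>d. eval ops imp D P F' (v(y := d)) A) ` D"
proof -
  obtain d0 where d0: "d0 \<in> D" using st unfolding is_struct_def by blast
  define w0 where "w0 args = (SOME w. range w \<subseteq> D \<and> map w xs = args)" for args
  define h where "h args d = eval ops imp D P F ((w0 args)(y := d)) A" for args d
  have "\<exists>g. g ` set fs \<subseteq> D \<and> h args ` g ` set fs = h args ` D" for args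
  proof (rule ex_witnesses_for_image[OF _ d0])
    show "card (h args ` D) \<le> card (set fs)"
      using card_mono[of "UNIV :: 'v set" "h args ` D"] len by (simp add: distinct_card[OF dist])
  qed simp_all
  then obtain wit where wit: "\<And>args. wit args ` set fs \<subseteq> D \<and> h args ` wit args ` set fs = h args ` D"
    by metis
  define F' where "F' f args = (if f \<in> set fs then wit args f else F f args)" for f args
  have "F' f args \<in> D" if "set args \<subseteq> D" for f args
    using wit[of args] st that unfolding F'_def is_struct_def by (auto simp: image_subset_iff)
  then have st': "is_struct D F'"
    using d0 unfolding is_struct_def by blast
  have agree: "F' f = F f" if "f \<notin> set fs" for f
    using that by (simp add: fun_eq_iff F'_def)
  have "\<forall>f\<in>funs A. F f = F' f"
  proof
    fix f assume "f \<in> funs A"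
    with disj have "f \<notin> set fs" by blast
    then show "F f = F' f" by (simp add: agree)
  qed
  then have evA: "eval ops imp D P F u A = eval ops imp D P F' u A" for u
    by (rule eval_cong_funs)
  have "(\<lambda>f. eval ops imp D P F' (v(y := F' f (map v xs))) A) ` set fs
      = (\<lambda>d. eval ops imp D P F' (v(y := d)) A) ` D" if v: "range v \<subseteq> D" for v
  proof -
    let ?args = "map v xs"
    have "\<exists>w. range w \<subseteq> D \<and> map w xs = ?args"
      using v by blast
    then have "map (w0 ?args) xs = ?args"
      unfolding w0_def by (rule someI2_ex) simp
    then have "\<forall>z\<in>fv A. ((w0 ?args)(y := d)) z = (v(y := d)) z" for d
      using fvA by auto
    then have h: "h ?args d = eval ops imp D P F' (v(y := d)) A" for d
      unfolding h_def evA by (rule eval_cong_fv)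
    have "(\<lambda>f. eval ops imp D P F' (v(y := F' f ?args)) A) ` set fs = h ?args ` wit ?args ` set fs"
      unfolding image_image h by (rule image_cong[OF refl]) (simp add: F'_def)
    also have "\<dots> = h ?args ` D" using wit[of ?args] by (rule conjunct2)
    also have "\<dots> = (\<lambda>d. eval ops imp D P F' (v(y := d)) A) ` D" by (simp add: h)
    finally show ?thesis .
  qed
  with st' agree show ?thesis using that by blast
qed

lemma is_skax_satisfiable:
  fixes ops :: "'c \<Rightarrow> 'v::{finite,complete_lattice} list \<Rightarrow> 'v" and D :: "'u set"
    and F :: "'f \<Rightarrow> 'u list \<Rightarrow> 'u" and S :: "('c, 'p, 'f) fm"
  assumes lat: "L_lattice ar pol ops imp" and st: "is_struct D F"
    and ax: "is_skax (card (UNIV :: 'v set)) S fs"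
  shows "\<exists>F'. is_struct D F' \<and> (\<forall>f. f \<notin> set fs \<longrightarrow> F' f = F f) \<and>
    (\<forall>v. range v \<subseteq> D \<longrightarrow> eval ops imp D P F' v S = top)"
proof -
  obtain A y xs where len: "length fs = card (UNIV :: 'v set)" and dist: "distinct fs"
    and disj: "set fs \<inter> funs A = {}" and fvA: "fv A \<subseteq> insert y (set xs)"
    and S: "S = closeAll xs (Imp (Ex y A) (bigOr (skolem_insts y fs xs A))) \<or>
            S = closeAll xs (Imp (bigAnd (skolem_insts y fs xs A)) (All y A))"
    using ax unfolding is_skax_def skolem_insts_def[symmetric] by blast
  obtain F' where st': "is_struct D F'" and agree: "\<And>f. f \<notin> set fs \<Longrightarrow> F' f = F f"
    and cover: "\<And>v. range v \<subseteq> D \<Longrightarrow> (\<lambda>f. eval ops imp D P F' (v(y := F' f (map v xs))) A) ` set fs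
                                   = (\<lambda>d. eval ops imp D P F' (v(y := d)) A) ` D"
    using ex_skolem_interpretation[OF st dist _ disj fvA] len by (metis order_refl)
  have "fs \<noteq> []" using len by auto
  then have "\<forall>v. range v \<subseteq> D \<longrightarrow> eval ops imp D P F' v S = top"
    using eval_skax_top[OF lat _ S cover] by simp
  with st' agree show ?thesis by blast
qed

lemma skax_seq_satisfiable:
  fixes ops :: "'c \<Rightarrow> 'v::{finite,complete_lattice} list \<Rightarrow> 'v" and D :: "'u set"
    and F :: "'f \<Rightarrow> 'u list \<Rightarrow> 'u" and Ss :: "('c, 'p, 'f) fm list"
  assumes lat: "L_lattice ar pol ops imp" and st: "is_struct D F"
    and seq: "skax_seq (card (UNIV :: 'v set)) Ss Fs"
  shows "\<exists>F'. is_struct D F' \<and> (\<forall>f. (\<forall>fs\<in>set Fs. f \<notin> set fs) \<longrightarrow> F' f = F f) \<and>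
    (\<forall>S\<in>set Ss. \<forall>v. range v \<subseteq> D \<longrightarrow> eval ops imp D P F' v S = top)"
proof -
  have len: "length Ss = length Fs"
    and ax: "\<And>j. j < length Ss \<Longrightarrow> is_skax (card (UNIV :: 'v set)) (Ss ! j) (Fs ! j)"
    and fresh: "\<And>j j'. j < length Ss \<Longrightarrow> j' < j \<Longrightarrow> set (Fs ! j) \<inter> funs (Ss ! j') = {}"
    using seq unfolding skax_seq_def by auto
  have "\<exists>F'. is_struct D F' \<and> (\<forall>f. (\<forall>j<n. f \<notin> set (Fs ! j)) \<longrightarrow> F' f = F f) \<and>
      (\<forall>j<n. \<forall>v. range v \<subseteq> D \<longrightarrow> eval ops imp D P F' v (Ss ! j) = top)" if "n \<le> length Ss" for n
    using that
  proof (induction n)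
    case 0
    then show ?case using st by auto
  next
    case (Suc n)
    then obtain F1 where F1: "is_struct D F1" "\<forall>f. (\<forall>j<n. f \<notin> set (Fs ! j)) \<longrightarrow> F1 f = F f"
      "\<forall>j<n. \<forall>v. range v \<subseteq> D \<longrightarrow> eval ops imp D P F1 v (Ss ! j) = top"
      by auto
    have n: "n < length Ss" using Suc.prems by simp
    obtain F2 where F2: "is_struct D F2" "\<forall>f. f \<notin> set (Fs ! n) \<longrightarrow> F2 f = F1 f"
      "\<forall>v. range v \<subseteq> D \<longrightarrow> eval ops imp D P F2 v (Ss ! n) = top"
      using is_skax_satisfiable[OF lat F1(1) ax[OF n]] by blast
    have "eval ops imp D P F2 v (Ss ! j) = eval ops imp D P F1 v (Ss ! j)" if "j < n" for j v
      using F2(2) fresh[OF n that] by (intro eval_cong_funs) auto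
    then have "\<forall>j<Suc n. \<forall>v. range v \<subseteq> D \<longrightarrow> eval ops imp D P F2 v (Ss ! j) = top"
      using F1(3) F2(3) less_Suc_eq by auto
    moreover have "\<forall>f. (\<forall>j<Suc n. f \<notin> set (Fs ! j)) \<longrightarrow> F2 f = F f"
      using F1(2) F2(2) by (simp add: less_Suc_eq)
    ultimately show ?case using F2(1) by blast
  qed
  from this[OF order_refl] obtain F' where F': "is_struct D F'"
    "\<forall>f. (\<forall>j<length Ss. f \<notin> set (Fs ! j)) \<longrightarrow> F' f = F f"
    "\<forall>j<length Ss. \<forall>v. range v \<subseteq> D \<longrightarrow> eval ops imp D P F' v (Ss ! j) = top"
    by blast
  have "\<forall>f. (\<forall>fs\<in>set Fs. f \<notin> set fs) \<longrightarrow> F' f = F f"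
    using F'(2) len by (metis nth_mem)
  moreover have "\<forall>S\<in>set Ss. \<forall>v. range v \<subseteq> D \<longrightarrow> eval ops imp D P F' v S = top"
    using F'(3) by (metis in_set_conv_nth)
  ultimately show ?thesis using F'(1) by blast
qed

lemma skax_seq_entails_eval_top:
  fixes ops :: "'c \<Rightarrow> 'v::{finite,complete_lattice} list \<Rightarrow> 'v" and D :: "'u set"
    and F :: "'f \<Rightarrow> 'u list \<Rightarrow> 'u" and Ss :: "('c, 'p, 'f) fm list"
  assumes lat: "L_lattice ar pol ops imp" and seq: "skax_seq (card (UNIV :: 'v set)) Ss Fs"
    and ent: "entails ops imp TYPE('u) Ss A" and st: "is_struct D F"
  obtains F' where "is_struct D F'" and "\<And>f. \<forall>fs\<in>set Fs. f \<notin> set fs \<Longrightarrow> F' f = F f"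
    and "\<And>S v. S \<in> set Ss \<Longrightarrow> range v \<subseteq> D \<Longrightarrow> eval ops imp D P F' v S = top"
    and "\<And>v. range v \<subseteq> D \<Longrightarrow> eval ops imp D P F' v A = top"
proof -
  obtain F' where st': "is_struct D F'" and agree: "\<forall>f. (\<forall>fs\<in>set Fs. f \<notin> set fs) \<longrightarrow> F' f = F f"
    and ax: "\<forall>S\<in>set Ss. \<forall>v. range v \<subseteq> D \<longrightarrow> eval ops imp D P F' v S = top"
    using skax_seq_satisfiable[OF lat st seq] by blast
  have "eval ops imp D P F' v A = top" if v: "range v \<subseteq> D" for v
  proof -
    have "Inf (eval ops imp D P F' v ` set Ss) = top"
      using ax v by simp
    then show ?thesis
      using ent st' v unfolding entails_def L_lattice_imp_top_iff[OF lat] by (metis top_unique)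
  qed
  with st' agree ax that show ?thesis by blast
qed

lemma valid_if_skax_seq_entails:
  fixes ops :: "'c \<Rightarrow> 'v::{finite,complete_lattice} list \<Rightarrow> 'v"
    and Ss :: "('c, 'p, 'f) fm list" and A :: "('c, 'p, 'f) fm"
  assumes lat: "L_lattice ar pol ops imp" and seq: "skax_seq (card (UNIV :: 'v set)) Ss Fs"
    and new: "\<forall>fs\<in>set Fs. set fs \<inter> funs A = {}" and ent: "entails ops imp TYPE('u) Ss A"
  shows "valid ops imp TYPE('u) A"
  unfolding valid_def
proof (intro allI impI)
  fix D :: "'u set" and P :: "'p \<Rightarrow> 'u list \<Rightarrow> 'v" and F :: "'f \<Rightarrow> 'u list \<Rightarrow> 'u"
    and v :: "nat \<Rightarrow> 'u"
  assume struct: "is_struct D F \<and> range v \<subseteq> D"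
  then obtain F' where agree: "\<And>f. \<forall>fs\<in>set Fs. f \<notin> set fs \<Longrightarrow> F' f = F f"
    and top: "eval ops imp D P F' v A = top"
    using skax_seq_entails_eval_top[OF lat seq ent, of D F P] by metis
  have "eval ops imp D P F' v A = eval ops imp D P F v A"
    using agree new by (intro eval_cong_funs) blast
  with top show "eval ops imp D P F v A = top" by simp
qed

section \<open>The Skolem axioms of a skolemization\<close>

abbreviation sk_syms :: "(nat list \<Rightarrow> nat \<Rightarrow> 'f) \<Rightarrow> nat \<Rightarrow> nat list set \<Rightarrow> 'f set" where
  "sk_syms nf W R \<equiv> (\<lambda>(q, i). nf q i) ` (R \<times> {..<W})"

lemma sk_syms_insert [simp]: "sk_syms nf W (insert q R) = nf q ` {..<W} \<union> sk_syms nf W R"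
  by auto

lemma sk_syms_disjointI: "\<forall>r\<in>N. \<forall>i<W. nf r i \<notin> G \<Longrightarrow> sk_syms nf W N \<inter> G = {}"
  by auto

lemma spos_prefix:
  fixes B :: "('c, 'p, 'f) fm" and as :: "('c, 'p, 'f) fm list"
  shows "r \<in> spos pol p q B \<Longrightarrow> prefix q r"
    and "r \<in> sposs pol p q c i as \<Longrightarrow> \<exists>k\<ge>i. prefix (q @ [k]) r"
proof (induction pol p q B and pol p q c i as arbitrary: r and r rule: spos_sposs.induct)
  case (9 pol p q c i a as)
  then show ?case by (fastforce dest: Suc_leD)
qed (auto split: if_splits dest: append_prefixD)

lemma funs_sk:
  fixes B :: "('c, 'p, 'f) fm" and as :: "('c, 'p, 'f) fm list"
  shows "W > 0 \<Longrightarrow> funs (sk pol W nf p q B) \<subseteq> funs B \<union> sk_syms nf W (spos pol p q B)"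
    and "W > 0 \<Longrightarrow> (\<Union>a\<in>set (sks pol W nf p q c i as). funs a)
           \<subseteq> (\<Union>a\<in>set as. funs a) \<union> sk_syms nf W (sposs pol p q c i as)"
proof (induction pol W nf p q B and pol W nf p q c i as rule: sk_sks.induct)
  case (6 pol W nf p q x a)
  show ?case
  proof (cases p)
    case True
    have "map (nf q) [0..<W] \<noteq> []" using "6.prems" by simp
    then have "funs (sk pol W nf p q (All x a)) \<subseteq> funs (sk pol W nf p (q @ [0]) a) \<union> set (map (nf q) [0..<W])"
      unfolding sk_All_strong[OF True] by (rule funs_bigAnd_skolem_insts)
    moreover have "set (map (nf q) [0..<W]) = nf q ` {..<W}" by auto
    moreover have "spos pol p q (All x a) = insert q (spos pol p (q @ [0]) a)" using True by simp
    ultimately show ?thesis using "6.IH"[OF "6.prems"] by (simp only: funs.simps sk_syms_insert) blast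
  next
    case False
    then have "sk pol W nf p q (All x a) = All x (sk pol W nf p (q @ [0]) a)"
      and "spos pol p q (All x a) = spos pol p (q @ [0]) a"
      by (simp_all add: sk_All_weak)
    with "6.IH"[OF "6.prems"] show ?thesis by simp
  qed
next
  case (7 pol W nf p q x a)
  show ?case
  proof (cases p)
    case False
    have "map (nf q) [0..<W] \<noteq> []" using "7.prems" by simp
    then have "funs (sk pol W nf p q (Ex x a)) \<subseteq> funs (sk pol W nf p (q @ [0]) a) \<union> set (map (nf q) [0..<W])"
      unfolding sk_Ex_strong[OF False] by (rule funs_bigOr_skolem_insts)
    moreover have "set (map (nf q) [0..<W]) = nf q ` {..<W}" by auto
    moreover have "spos pol p q (Ex x a) = insert q (spos pol p (q @ [0]) a)" using False by simp
    ultimately show ?thesis using "7.IH"[OF "7.prems"] by (simp only: funs.simps sk_syms_insert) blast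
  next
    case True
    then have "sk pol W nf p q (Ex x a) = Ex x (sk pol W nf p (q @ [0]) a)"
      and "spos pol p q (Ex x a) = spos pol p (q @ [0]) a"
      by (simp_all add: sk_Ex_weak)
    with "7.IH"[OF "7.prems"] show ?thesis by simp
  qed
qed auto

definition skax_All :: "'f list \<Rightarrow> nat \<Rightarrow> ('c, 'p, 'f) fm \<Rightarrow> ('c, 'p, 'f) fm" where
  "skax_All fs x a = (let xs = sorted_list_of_set (fv (All x a))
     in closeAll xs (Imp (bigAnd (skolem_insts x fs xs a)) (All x a)))"

definition skax_Ex :: "'f list \<Rightarrow> nat \<Rightarrow> ('c, 'p, 'f) fm \<Rightarrow> ('c, 'p, 'f) fm" where
  "skax_Ex fs x a = (let xs = sorted_list_of_set (fv (Ex x a))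
     in closeAll xs (Imp (Ex x a) (bigOr (skolem_insts x fs xs a))))"

lemma is_skax_skax_All:
  "length fs = W \<Longrightarrow> distinct fs \<Longrightarrow> set fs \<inter> funs a = {} \<Longrightarrow> is_skax W (skax_All fs x a) fs"
  unfolding is_skax_def skolem_insts_def[symmetric]
  by (intro exI[of _ a] exI[of _ x] exI[of _ "sorted_list_of_set (fv (All x a))"])
     (auto simp: skax_All_def Let_def)

lemma is_skax_skax_Ex:
  "length fs = W \<Longrightarrow> distinct fs \<Longrightarrow> set fs \<inter> funs a = {} \<Longrightarrow> is_skax W (skax_Ex fs x a) fs"
  unfolding is_skax_def skolem_insts_def[symmetric]
  by (intro exI[of _ a] exI[of _ x] exI[of _ "sorted_list_of_set (fv (Ex x a))"])
     (auto simp: skax_Ex_def Let_def)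

lemma funs_skax_All: "fs \<noteq> [] \<Longrightarrow> funs (skax_All fs x a) \<subseteq> funs a \<union> set fs"
  unfolding skax_All_def Let_def using funs_bigAnd_skolem_insts by simp

lemma funs_skax_Ex: "fs \<noteq> [] \<Longrightarrow> funs (skax_Ex fs x a) \<subseteq> funs a \<union> set fs"
  unfolding skax_Ex_def Let_def using funs_bigOr_skolem_insts by simp

text \<open>The Skolem axioms for the occurrences skolemized by sk, paired with their positions and
  listed in post-order. An axiom mentions only Skolem symbols of its own position and of positions
  below it, so in this order each axiom introduces symbols that are new for the earlier ones.\<close>

fun skolem_axioms :: "('c \<Rightarrow> nat \<Rightarrow> bool) \<Rightarrow> nat \<Rightarrow> (nat list \<Rightarrow> nat \<Rightarrow> 'f) \<Rightarrow> bool \<Rightarrow> nat list \<Rightarrow>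
    ('c, 'p, 'f) fm \<Rightarrow> (nat list \<times> ('c, 'p, 'f) fm) list"
and skolem_axiomss :: "('c \<Rightarrow> nat \<Rightarrow> bool) \<Rightarrow> nat \<Rightarrow> (nat list \<Rightarrow> nat \<Rightarrow> 'f) \<Rightarrow> bool \<Rightarrow> nat list \<Rightarrow>
    'c \<Rightarrow> nat \<Rightarrow> ('c, 'p, 'f) fm list \<Rightarrow> (nat list \<times> ('c, 'p, 'f) fm) list" where
  "skolem_axioms pol W nf p q (Atom P ts) = []"
| "skolem_axioms pol W nf p q (Or a b) =
     skolem_axioms pol W nf p (q @ [0]) a @ skolem_axioms pol W nf p (q @ [1]) b"
| "skolem_axioms pol W nf p q (And a b) =
     skolem_axioms pol W nf p (q @ [0]) a @ skolem_axioms pol W nf p (q @ [1]) b"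
| "skolem_axioms pol W nf p q (Imp a b) =
     skolem_axioms pol W nf (\<not> p) (q @ [0]) a @ skolem_axioms pol W nf p (q @ [1]) b"
| "skolem_axioms pol W nf p q (Conn c as) = skolem_axiomss pol W nf p q c 0 as"
| "skolem_axioms pol W nf p q (All x a) = skolem_axioms pol W nf p (q @ [0]) a @
     (if p then [(q, skax_All (map (nf q) [0..<W]) x (sk pol W nf p (q @ [0]) a))] else [])"
| "skolem_axioms pol W nf p q (Ex x a) = skolem_axioms pol W nf p (q @ [0]) a @
     (if \<not> p then [(q, skax_Ex (map (nf q) [0..<W]) x (sk pol W nf p (q @ [0]) a))] else [])"
| "skolem_axiomss pol W nf p q c i [] = []"
| "skolem_axiomss pol W nf p q c i (a # as) =
     skolem_axioms pol W nf (pol c i = p) (q @ [i]) a @ skolem_axiomss pol W nf p q c (Suc i) as"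

lemma skolem_axioms_pos:
  fixes B :: "('c, 'p, 'f) fm" and as :: "('c, 'p, 'f) fm list"
  shows "e \<in> set (skolem_axioms pol W nf p q B) \<Longrightarrow> fst e \<in> spos pol p q B"
    and "e \<in> set (skolem_axiomss pol W nf p q c i as) \<Longrightarrow> fst e \<in> sposs pol p q c i as"
  by (induction pol W nf p q B and pol W nf p q c i as arbitrary: e and e
      rule: skolem_axioms_skolem_axiomss.induct) (auto split: if_splits)

lemma sorted_skolem_axioms:
  fixes B :: "('c, 'p, 'f) fm" and as :: "('c, 'p, 'f) fm list"
  shows "sorted_wrt (\<lambda>e e'. \<not> prefix (fst e) (fst e')) (skolem_axioms pol W nf p q B)"
    and "sorted_wrt (\<lambda>e e'. \<not> prefix (fst e) (fst e')) (skolem_axiomss pol W nf p q c i as)"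
proof (induction pol W nf p q B and pol W nf p q c i as rule: skolem_axioms_skolem_axiomss.induct)
  case (9 pol W nf p q c i a as)
  have "\<not> prefix (fst e) (fst e')"
    if "e \<in> set (skolem_axioms pol W nf (pol c i = p) (q @ [i]) a)"
      and "e' \<in> set (skolem_axiomss pol W nf p q c (Suc i) as)" for e e'
    using spos_prefix(1)[OF skolem_axioms_pos(1)[OF that(1)]]
      spos_prefix(2)[OF skolem_axioms_pos(2)[OF that(2)]]
    by (auto simp: prefix_def)
  with 9 show ?case by (auto simp: sorted_wrt_append)
qed (auto simp: sorted_wrt_append prefix_def dest!: skolem_axioms_pos spos_prefix)

lemma funs_skD:
  "W > 0 \<Longrightarrow> f \<in> funs (sk pol W nf p q B) \<Longrightarrow>
   f \<in> funs B \<or> (\<exists>r\<in>spos pol p q B. \<exists>j<W. f = nf r j)"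
proof -
  assume W: "W > 0" and f: "f \<in> funs (sk pol W nf p q B)"
  have "f \<in> funs B \<union> sk_syms nf W (spos pol p q B)"
    by (rule subsetD[OF funs_sk(1)[OF W] f])
  then show ?thesis by auto
qed

lemma funs_skax_new:
  assumes W: "W > 0" and S: "funs S \<subseteq> funs (sk pol W nf p (q @ [0]) a) \<union> set (map (nf q) [0..<W])"
    and f: "f \<in> funs S"
  shows "f \<in> funs a \<or> (\<exists>r\<in>insert q (spos pol p (q @ [0]) a). prefix q r \<and> (\<exists>j<W. f = nf r j))"
proof -
  have "f \<in> funs (sk pol W nf p (q @ [0]) a) \<or> f \<in> set (map (nf q) [0..<W])"
    using S f by blast
  then show ?thesis
  proof
    assume "f \<in> funs (sk pol W nf p (q @ [0]) a)"
    from funs_skD[OF W this] show ?thesis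
    proof
      assume "\<exists>r\<in>spos pol p (q @ [0]) a. \<exists>j<W. f = nf r j"
      then obtain r j where r: "r \<in> spos pol p (q @ [0]) a" "j < W" "f = nf r j"
        by blast
      have "prefix q r" using spos_prefix(1)[OF r(1)] by (rule append_prefixD)
      with r show ?thesis by blast
    qed simp
  qed auto
qed

lemma skolem_axioms_funs:
  fixes B :: "('c, 'p, 'f) fm" and as :: "('c, 'p, 'f) fm list"
  shows "W > 0 \<Longrightarrow> e \<in> set (skolem_axioms pol W nf p q B) \<Longrightarrow> f \<in> funs (snd e) \<Longrightarrow>
      f \<in> funs B \<or> (\<exists>r\<in>spos pol p q B. prefix (fst e) r \<and> (\<exists>j<W. f = nf r j))"
    and "W > 0 \<Longrightarrow> e \<in> set (skolem_axiomss pol W nf p q c i as) \<Longrightarrow> f \<in> funs (snd e) \<Longrightarrow>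
      f \<in> (\<Union>a\<in>set as. funs a) \<or> (\<exists>r\<in>sposs pol p q c i as. prefix (fst e) r \<and> (\<exists>j<W. f = nf r j))"
proof (induction pol W nf p q B and pol W nf p q c i as arbitrary: e and e
    rule: skolem_axioms_skolem_axiomss.induct)
  case (2 pol W nf p q a b)
  note IH = "2.IH"(1)[OF "2.prems"(1) _ "2.prems"(3)] "2.IH"(2)[OF "2.prems"(1) _ "2.prems"(3)]
  have "e \<in> set (skolem_axioms pol W nf p (q @ [0]) a) \<or> e \<in> set (skolem_axioms pol W nf p (q @ [1]) b)"
    using "2.prems"(2) by simp
  then show ?case unfolding spos.simps funs.simps using IH by blast
next
  case (3 pol W nf p q a b)
  note IH = "3.IH"(1)[OF "3.prems"(1) _ "3.prems"(3)] "3.IH"(2)[OF "3.prems"(1) _ "3.prems"(3)]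
  have "e \<in> set (skolem_axioms pol W nf p (q @ [0]) a) \<or> e \<in> set (skolem_axioms pol W nf p (q @ [1]) b)"
    using "3.prems"(2) by simp
  then show ?case unfolding spos.simps funs.simps using IH by blast
next
  case (4 pol W nf p q a b)
  note IH = "4.IH"(1)[OF "4.prems"(1) _ "4.prems"(3)] "4.IH"(2)[OF "4.prems"(1) _ "4.prems"(3)]
  have "e \<in> set (skolem_axioms pol W nf (\<not> p) (q @ [0]) a) \<or> e \<in> set (skolem_axioms pol W nf p (q @ [1]) b)"
    using "4.prems"(2) by simp
  then show ?case unfolding spos.simps funs.simps using IH by blast
next
  case (5 pol W nf p q c as)
  show ?case
    using "5.IH"[OF "5.prems"(1) _ "5.prems"(3)] "5.prems"(2)
    by (simp only: skolem_axioms.simps spos.simps funs.simps)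
next
  case (9 pol W nf p q c i a as)
  note IH = "9.IH"(1)[OF "9.prems"(1) _ "9.prems"(3)] "9.IH"(2)[OF "9.prems"(1) _ "9.prems"(3)]
  have "e \<in> set (skolem_axioms pol W nf (pol c i = p) (q @ [i]) a) \<or>
        e \<in> set (skolem_axiomss pol W nf p q c (Suc i) as)"
    using "9.prems"(2) by simp
  moreover have "(\<Union>b\<in>set (a # as). funs b) = funs a \<union> (\<Union>b\<in>set as. funs b)"
    and "sposs pol p q c i (a # as) = spos pol (pol c i = p) (q @ [i]) a \<union> sposs pol p q c (Suc i) as"
    by simp_all
  ultimately show ?case using IH by blast
next
  case (6 pol W nf p q x a)
  let ?fs = "map (nf q) [0..<W]" and ?a' = "sk pol W nf p (q @ [0]) a"
  have "e \<in> set (skolem_axioms pol W nf p (q @ [0]) a) \<or> (p \<and> e = (q, skax_All ?fs x ?a'))"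
    using "6.prems"(2) by (cases p) auto
  then show ?case
  proof
    assume "e \<in> set (skolem_axioms pol W nf p (q @ [0]) a)"
    moreover have "spos pol p (q @ [0]) a \<subseteq> spos pol p q (All x a)" by auto
    ultimately show ?thesis using "6.IH"[OF "6.prems"(1) _ "6.prems"(3)] by (simp only: funs.simps) blast
  next
    assume new: "p \<and> e = (q, skax_All ?fs x ?a')"
    have ne: "?fs \<noteq> []" using "6.prems"(1) by simp
    moreover have "spos pol p q (All x a) = insert q (spos pol p (q @ [0]) a)" and "fst e = q"
      using new by simp_all
    ultimately show ?thesis
      using funs_skax_new[OF "6.prems"(1) funs_skax_All[OF ne] "6.prems"(3)[unfolded new[THEN conjunct2] snd_conv]]
      by (simp only: funs.simps)
  qed
next
  case (7 pol W nf p q x a)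
  let ?fs = "map (nf q) [0..<W]" and ?a' = "sk pol W nf p (q @ [0]) a"
  have "e \<in> set (skolem_axioms pol W nf p (q @ [0]) a) \<or> (\<not> p \<and> e = (q, skax_Ex ?fs x ?a'))"
    using "7.prems"(2) by (cases p) auto
  then show ?case
  proof
    assume "e \<in> set (skolem_axioms pol W nf p (q @ [0]) a)"
    moreover have "spos pol p (q @ [0]) a \<subseteq> spos pol p q (Ex x a)" by auto
    ultimately show ?thesis using "7.IH"[OF "7.prems"(1) _ "7.prems"(3)] by (simp only: funs.simps) blast
  next
    assume new: "\<not> p \<and> e = (q, skax_Ex ?fs x ?a')"
    have ne: "?fs \<noteq> []" using "7.prems"(1) by simp
    moreover have "spos pol p q (Ex x a) = insert q (spos pol p (q @ [0]) a)" and "fst e = q"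
      using new by simp_all
    ultimately show ?thesis
      using funs_skax_new[OF "7.prems"(1) funs_skax_Ex[OF ne] "7.prems"(3)[unfolded new[THEN conjunct2] snd_conv]]
      by (simp only: funs.simps)
  qed
qed simp_all

lemma distinct_skolem_syms:
  "inj_on (\<lambda>(q, i). nf q i) (N \<times> {..<W}) \<Longrightarrow> q \<in> N \<Longrightarrow> distinct (map (nf q) [0..<W])"
  by (auto simp: distinct_map inj_on_def)

lemma skolem_syms_disjoint_sk:
  assumes inj: "inj_on (\<lambda>(q, i). nf q i) (N \<times> {..<W})" and fresh: "\<forall>r\<in>N. \<forall>i<W. nf r i \<notin> G"
    and W: "W > 0" and q: "q \<in> N" and sub: "spos pol p (q @ [0]) a \<subseteq> N" and funs_a: "funs a \<subseteq> G"
  shows "set (map (nf q) [0..<W]) \<inter> funs (sk pol W nf p (q @ [0]) a) = {}"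
proof (rule ccontr)
  assume "set (map (nf q) [0..<W]) \<inter> funs (sk pol W nf p (q @ [0]) a) \<noteq> {}"
  then obtain i where i: "i < W" and f: "nf q i \<in> funs (sk pol W nf p (q @ [0]) a)"
    by auto
  from funs_skD[OF W f] show False
  proof
    assume "nf q i \<in> funs a"
    with funs_a fresh q i show False by blast
  next
    assume "\<exists>r\<in>spos pol p (q @ [0]) a. \<exists>j<W. nf q i = nf r j"
    then obtain r j where r: "r \<in> spos pol p (q @ [0]) a" and j: "j < W" and eq: "nf q i = nf r j"
      by blast
    have "q = r" using inj_onD[OF inj, of "(q, i)" "(r, j)"] eq q i r j sub by auto
    moreover have "prefix (q @ [0]) r" by (rule spos_prefix(1)[OF r])
    ultimately show False by (simp add: prefix_def)
  qed
qed

lemma skolem_axioms_is_skax: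
  fixes B :: "('c, 'p, 'f) fm" and as :: "('c, 'p, 'f) fm list"
  shows "inj_on (\<lambda>(q, i). nf q i) (N \<times> {..<W}) \<Longrightarrow> \<forall>r\<in>N. \<forall>i<W. nf r i \<notin> G \<Longrightarrow> W > 0 \<Longrightarrow>
      spos pol p q B \<subseteq> N \<Longrightarrow> funs B \<subseteq> G \<Longrightarrow> e \<in> set (skolem_axioms pol W nf p q B) \<Longrightarrow>
      is_skax W (snd e) (map (nf (fst e)) [0..<W])"
    and "inj_on (\<lambda>(q, i). nf q i) (N \<times> {..<W}) \<Longrightarrow> \<forall>r\<in>N. \<forall>i<W. nf r i \<notin> G \<Longrightarrow> W > 0 \<Longrightarrow>
      sposs pol p q c i as \<subseteq> N \<Longrightarrow> (\<Union>a\<in>set as. funs a) \<subseteq> G \<Longrightarrow>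
      e \<in> set (skolem_axiomss pol W nf p q c i as) \<Longrightarrow> is_skax W (snd e) (map (nf (fst e)) [0..<W])"
proof (induction pol W nf p q B and pol W nf p q c i as arbitrary: e and e
    rule: skolem_axioms_skolem_axiomss.induct)
  case (6 pol W nf p q x a)
  let ?fs = "map (nf q) [0..<W]" and ?a' = "sk pol W nf p (q @ [0]) a"
  from "6.prems"(6) consider (old) "e \<in> set (skolem_axioms pol W nf p (q @ [0]) a)"
    | (new) p "e = (q, skax_All ?fs x ?a')"
    by (cases p) auto
  then show ?case
  proof cases
    case old
    with "6.prems"(1-5) show ?thesis by (intro "6.IH") auto
  next
    case new
    have "q \<in> N" and "spos pol p (q @ [0]) a \<subseteq> N" using "6.prems"(4) new(1) by auto
    then have "is_skax W (skax_All ?fs x ?a') ?fs"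
      using "6.prems"(1-3,5)
      by (intro is_skax_skax_All distinct_skolem_syms skolem_syms_disjoint_sk) auto
    with new(2) show ?thesis by simp
  qed
next
  case (7 pol W nf p q x a)
  let ?fs = "map (nf q) [0..<W]" and ?a' = "sk pol W nf p (q @ [0]) a"
  from "7.prems"(6) consider (old) "e \<in> set (skolem_axioms pol W nf p (q @ [0]) a)"
    | (new) "\<not> p" "e = (q, skax_Ex ?fs x ?a')"
    by (cases p) auto
  then show ?case
  proof cases
    case old
    with "7.prems"(1-5) show ?thesis by (intro "7.IH") auto
  next
    case new
    have "q \<in> N" and "spos pol p (q @ [0]) a \<subseteq> N" using "7.prems"(4) new(1) by auto
    then have "is_skax W (skax_Ex ?fs x ?a') ?fs"
      using "7.prems"(1-3,5)
      by (intro is_skax_skax_Ex distinct_skolem_syms skolem_syms_disjoint_sk) auto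
    with new(2) show ?thesis by simp
  qed
qed auto

lemma eval_skax_All_topD:
  assumes lat: "L_lattice ar pol ops imp" and st: "is_struct D F" and fs: "fs \<noteq> []"
    and ax: "eval ops imp D P F v (skax_All fs x a) = top" and v: "range v \<subseteq> D"
  shows "eval ops imp D P F v (bigAnd (skolem_insts x fs (sorted_list_of_set (fv (All x a))) a))
       = eval ops imp D P F v (All x a)"
proof (rule antisym)
  have "eval ops imp D P F v (Imp (bigAnd (skolem_insts x fs (sorted_list_of_set (fv (All x a))) a))
      (All x a)) = top"
    using eval_closeAll_topD[OF ax[unfolded skax_All_def Let_def] v] .
  then show "eval ops imp D P F v (bigAnd (skolem_insts x fs (sorted_list_of_set (fv (All x a))) a))
      \<le> eval ops imp D P F v (All x a)"
    by (simp add: L_lattice_imp_top_iff[OF lat])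
qed (rule eval_All_le_skolem_insts[OF st v fs])

lemma eval_skax_Ex_topD:
  assumes lat: "L_lattice ar pol ops imp" and st: "is_struct D F" and fs: "fs \<noteq> []"
    and ax: "eval ops imp D P F v (skax_Ex fs x a) = top" and v: "range v \<subseteq> D"
  shows "eval ops imp D P F v (bigOr (skolem_insts x fs (sorted_list_of_set (fv (Ex x a))) a))
       = eval ops imp D P F v (Ex x a)"
proof (rule antisym)
  have "eval ops imp D P F v (Imp (Ex x a)
      (bigOr (skolem_insts x fs (sorted_list_of_set (fv (Ex x a))) a))) = top"
    using eval_closeAll_topD[OF ax[unfolded skax_Ex_def Let_def] v] .
  then show "eval ops imp D P F v (Ex x a)
      \<le> eval ops imp D P F v (bigOr (skolem_insts x fs (sorted_list_of_set (fv (Ex x a))) a))"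
    by (simp add: L_lattice_imp_top_iff[OF lat])
qed (rule eval_skolem_insts_le_Ex[OF st v fs])

lemma eval_sk_eq_if_skolem_axioms:
  fixes B :: "('c, 'p, 'f) fm" and as :: "('c, 'p, 'f) fm list"
  assumes lat: "L_lattice ar pol ops imp" and st: "is_struct D F"
  shows "W > 0 \<Longrightarrow> (\<forall>e\<in>set (skolem_axioms pol W nf p q B). \<forall>v. range v \<subseteq> D \<longrightarrow>
        eval ops imp D P F v (snd e) = top) \<Longrightarrow> range v \<subseteq> D \<Longrightarrow>
      eval ops imp D P F v (sk pol W nf p q B) = eval ops imp D P F v B"
    and "W > 0 \<Longrightarrow> (\<forall>e\<in>set (skolem_axiomss pol W nf p q c i as). \<forall>v. range v \<subseteq> D \<longrightarrow>
        eval ops imp D P F v (snd e) = top) \<Longrightarrow> range v \<subseteq> D \<Longrightarrow>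
      map (eval ops imp D P F v) (sks pol W nf p q c i as) = map (eval ops imp D P F v) as"
proof (induction pol W nf p q B and pol W nf p q c i as arbitrary: v and v
    rule: skolem_axioms_skolem_axiomss.induct)
  case (6 pol W nf p q x a)
  let ?fs = "map (nf q) [0..<W]" and ?a' = "sk pol W nf p (q @ [0]) a"
  have IH: "eval ops imp D P F w ?a' = eval ops imp D P F w a" if "range w \<subseteq> D" for w
    using "6.prems"(1,2) that by (intro "6.IH") auto
  have "eval ops imp D P F (v(x := d)) ?a' = eval ops imp D P F (v(x := d)) a" if "d \<in> D" for d
    using IH range_fun_upd_subset[OF "6.prems"(3) that] by blast
  then have All_eq: "eval ops imp D P F v (All x ?a') = eval ops imp D P F v (All x a)"
    using image_cong[OF refl] by simp
  show ?case
  proof (cases p)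
    case True
    have "eval ops imp D P F v (skax_All ?fs x ?a') = top"
      using "6.prems"(2,3) True by simp
    then have "eval ops imp D P F v (sk pol W nf p q (All x a)) = eval ops imp D P F v (All x ?a')"
      unfolding sk_All_strong[OF True] using "6.prems"(1,3)
      by (intro eval_skax_All_topD[OF lat st]) auto
    with All_eq show ?thesis by simp
  qed (use All_eq in \<open>simp add: sk_All_weak\<close>)
next
  case (7 pol W nf p q x a)
  let ?fs = "map (nf q) [0..<W]" and ?a' = "sk pol W nf p (q @ [0]) a"
  have IH: "eval ops imp D P F w ?a' = eval ops imp D P F w a" if "range w \<subseteq> D" for w
    using "7.prems"(1,2) that by (intro "7.IH") auto
  have "eval ops imp D P F (v(x := d)) ?a' = eval ops imp D P F (v(x := d)) a" if "d \<in> D" for d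
    using IH range_fun_upd_subset[OF "7.prems"(3) that] by blast
  then have Ex_eq: "eval ops imp D P F v (Ex x ?a') = eval ops imp D P F v (Ex x a)"
    using image_cong[OF refl] by simp
  show ?case
  proof (cases p)
    case False
    have "eval ops imp D P F v (skax_Ex ?fs x ?a') = top"
      using "7.prems"(2,3) False by simp
    then have "eval ops imp D P F v (sk pol W nf p q (Ex x a)) = eval ops imp D P F v (Ex x ?a')"
      unfolding sk_Ex_strong[OF False] using "7.prems"(1,3)
      by (intro eval_skax_Ex_topD[OF lat st]) auto
    with Ex_eq show ?thesis by simp
  qed (use Ex_eq in \<open>simp add: sk_Ex_weak\<close>)
qed auto

lemma skolem_axioms_syms:
  "e \<in> set (skolem_axioms pol W nf p q B) \<Longrightarrow>
   set (map (nf (fst e)) [0..<W]) \<subseteq> sk_syms nf W (spos pol p q B)"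
  by (auto dest!: skolem_axioms_pos(1) intro!: image_eqI[where x = "(fst e, _)"])

lemma skax_seq_skolem_axioms:
  assumes inj: "inj_on (\<lambda>(q, i). nf q i) (spos pol p q B \<times> {..<W})"
    and fresh: "\<forall>r\<in>spos pol p q B. \<forall>i<W. nf r i \<notin> G" and funs_B: "funs B \<subseteq> G" and W: "W > 0"
  shows "skax_seq W (map snd (skolem_axioms pol W nf p q B))
    (map (\<lambda>e. map (nf (fst e)) [0..<W]) (skolem_axioms pol W nf p q B))"
proof -
  let ?L = "skolem_axioms pol W nf p q B"
  have pos: "fst (?L ! j) \<in> spos pol p q B" if "j < length ?L" for j
    using that by (intro skolem_axioms_pos(1)[where W = W and nf = nf]) simp
  have "set (map (nf (fst (?L ! j))) [0..<W]) \<inter> funs (snd (?L ! j')) = {}"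
    if j: "j < length ?L" and j': "j' < j" for j j'
  proof (rule ccontr)
    assume "set (map (nf (fst (?L ! j))) [0..<W]) \<inter> funs (snd (?L ! j')) \<noteq> {}"
    then obtain i where i: "i < W" and f: "nf (fst (?L ! j)) i \<in> funs (snd (?L ! j'))"
      by auto
    have "?L ! j' \<in> set ?L" using j j' by simp
    from skolem_axioms_funs(1)[OF W this f] show False
    proof
      assume "nf (fst (?L ! j)) i \<in> funs B"
      with funs_B fresh pos[OF j] i show False by blast
    next
      assume "\<exists>r\<in>spos pol p q B. prefix (fst (?L ! j')) r \<and> (\<exists>k<W. nf (fst (?L ! j)) i = nf r k)"
      then obtain r k where r: "r \<in> spos pol p q B" "prefix (fst (?L ! j')) r"
        and k: "k < W" and eq: "nf (fst (?L ! j)) i = nf r k"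
        by blast
      have "fst (?L ! j) = r"
        using inj_onD[OF inj, of "(fst (?L ! j), i)" "(r, k)"] eq pos[OF j] i r(1) k by auto
      moreover have "\<not> prefix (fst (?L ! j')) (fst (?L ! j))"
        using sorted_wrt_nth_less[OF sorted_skolem_axioms(1) j' j] .
      ultimately show False using r(2) by simp
    qed
  qed
  moreover have "is_skax W (snd (?L ! j)) (map (nf (fst (?L ! j))) [0..<W])" if "j < length ?L" for j
    using inj fresh W funs_B that by (intro skolem_axioms_is_skax(1)) auto
  ultimately show ?thesis
    unfolding skax_seq_def by auto
qed

lemma ex_skax_seq_skolem_axioms:
  assumes inj: "inj_on (\<lambda>(q, i). nf q i) (spos pol p q B \<times> {..<W})"
    and fresh: "\<forall>r\<in>spos pol p q B. \<forall>i<W. nf r i \<notin> G" and funs_B: "funs B \<subseteq> G" and W: "W > 0"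
  obtains Ss Fs where "skax_seq W Ss Fs" and "snd ` set (skolem_axioms pol W nf p q B) \<subseteq> set Ss"
    and "\<forall>fs\<in>set Fs. set fs \<subseteq> sk_syms nf W (spos pol p q B)"
    and "\<forall>fs\<in>set Fs. set fs \<inter> G = {}"
proof -
  let ?L = "skolem_axioms pol W nf p q B"
  let ?Fs = "map (\<lambda>e. map (nf (fst e)) [0..<W]) ?L"
  have syms: "\<forall>fs\<in>set ?Fs. set fs \<subseteq> sk_syms nf W (spos pol p q B)"
    using skolem_axioms_syms by fastforce
  have disj: "sk_syms nf W (spos pol p q B) \<inter> G = {}"
    using fresh by (rule sk_syms_disjointI)
  have "\<forall>fs\<in>set ?Fs. set fs \<inter> G = {}"
  proof
    fix fs assume "fs \<in> set ?Fs"
    with syms have "set fs \<subseteq> sk_syms nf W (spos pol p q B)"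
      by (rule bspec)
    with disj show "set fs \<inter> G = {}"
      using Int_mono[OF _ order_refl, of "set fs" _ G] by auto
  qed
  with skax_seq_skolem_axioms[OF inj fresh funs_B W] syms show ?thesis
    using that by simp
qed

lemma entails_fill_if_entails_fill_sk:
  fixes ops :: "'c \<Rightarrow> 'v::{finite,complete_lattice} list \<Rightarrow> 'v" and B :: "('c, 'p, 'f) fm"
  assumes lat: "L_lattice ar pol ops imp" and seq: "skax_seq (card (UNIV :: 'v set)) Ss Fs"
    and axioms: "snd ` set (skolem_axioms pol (card (UNIV :: 'v set)) nf (cpol pol C) q B) \<subseteq> set Ss"
    and new: "\<forall>fs\<in>set Fs. set fs \<inter> funs (fill C B) = {}"
    and ent: "entails ops imp TYPE('u) Ss (fill C (sk pol (card (UNIV :: 'v set)) nf (cpol pol C) q B))"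
  shows "entails ops imp TYPE('u) Ss (fill C B)"
  unfolding entails_def
proof (intro allI impI)
  let ?W = "card (UNIV :: 'v set)"
  fix D :: "'u set" and P :: "'p \<Rightarrow> 'u list \<Rightarrow> 'v" and F :: "'f \<Rightarrow> 'u list \<Rightarrow> 'u"
    and v :: "nat \<Rightarrow> 'u"
  assume struct: "is_struct D F \<and> range v \<subseteq> D"
  then obtain F' where st': "is_struct D F'" and agree: "\<And>f. \<forall>fs\<in>set Fs. f \<notin> set fs \<Longrightarrow> F' f = F f"
    and ax: "\<And>S w. S \<in> set Ss \<Longrightarrow> range w \<subseteq> D \<Longrightarrow> eval ops imp D P F' w S = top"
    and top: "eval ops imp D P F' v (fill C (sk pol ?W nf (cpol pol C) q B)) = top"
    using skax_seq_entails_eval_top[OF lat seq ent, of D F P] by metis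
  have W: "?W > 0" by (simp add: finite_UNIV_card_ge_0)
  have "eval ops imp D P F' w (sk pol ?W nf (cpol pol C) q B) = eval ops imp D P F' w B"
    if "range w \<subseteq> D" for w
    using axioms ax that by (intro eval_sk_eq_if_skolem_axioms(1)[OF lat st' W]) auto
  then have "eval ops imp D P F' v (fill C B) = top"
    using top eval_fill_cong[of D ops imp P F' B "sk pol ?W nf (cpol pol C) q B" v C] struct by simp
  moreover have "eval ops imp D P F' v (fill C B) = eval ops imp D P F v (fill C B)"
    using agree new by (intro eval_cong_funs) blast
  ultimately show "imp (Inf (eval ops imp D P F v ` set Ss)) (eval ops imp D P F v (fill C B)) = top"
    by (simp add: L_lattice_imp_top_iff[OF lat])
qed

theorem mainTheorem13:
  fixes ar :: "'c::finite \<Rightarrow> nat" and pol :: "'c \<Rightarrow> nat \<Rightarrow> bool"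
    and ops :: "'c \<Rightarrow> 'v::{finite,complete_lattice} list \<Rightarrow> 'v"
    and imp :: "'v \<Rightarrow> 'v \<Rightarrow> 'v"
    and Cx :: "('c, 'p, 'f) ctx" and B :: "('c, 'p, 'f) fm"
    and nf :: "nat list \<Rightarrow> nat \<Rightarrow> 'f"
  assumes lat: "L_lattice ar pol ops imp"
    and wff: "wf ar (fill Cx B)"
    and nobind: "cbound Cx \<inter> fv B = {}"
    and new_inj: "inj_on (\<lambda>(q, i). nf q i) (spos pol (cpol pol Cx) [] B \<times> {..<card (UNIV :: 'v set)})"
    and new_fresh: "\<forall>q \<in> spos pol (cpol pol Cx) [] B. \<forall>i < card (UNIV :: 'v set). nf q i \<notin> funs (fill Cx B)"
  shows
    "(valid ops imp TYPE('u) (fill Cx B) \<longrightarrow>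
        valid ops imp TYPE('u) (fill Cx (sk pol (card (UNIV :: 'v set)) nf (cpol pol Cx) [] B)))
     \<and> (\<exists>Ss Fs. skax_seq (card (UNIV :: 'v set)) Ss Fs \<and>
          (\<forall>fs \<in> set Fs. set fs \<subseteq> (\<lambda>(q, i). nf q i) ` (spos pol (cpol pol Cx) [] B \<times> {..<card (UNIV :: 'v set)})) \<and>
          (entails ops imp TYPE('u) Ss (fill Cx (sk pol (card (UNIV :: 'v set)) nf (cpol pol Cx) [] B)) \<longrightarrow>
           entails ops imp TYPE('u) Ss (fill Cx B)))
     \<and> (\<forall>Ss Fs (A :: ('c, 'p, 'f) fm). skax_seq (card (UNIV :: 'v set)) Ss Fs \<and> (\<forall>fs \<in> set Fs. set fs \<inter> funs A = {}) \<and>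
          entails ops imp TYPE('u) Ss A \<longrightarrow> valid ops imp TYPE('u) A)"
proof (intro conjI)
  let ?W = "card (UNIV :: 'v set)" and ?p = "cpol pol Cx"
  have W: "?W > 0" by (simp add: finite_UNIV_card_ge_0)
  show "valid ops imp TYPE('u) (fill Cx B) \<longrightarrow> valid ops imp TYPE('u) (fill Cx (sk pol ?W nf ?p [] B))"
    using valid_fill_sk[OF lat wff W] by blast
  obtain Ss Fs where seq: "skax_seq ?W Ss Fs"
    and axioms: "snd ` set (skolem_axioms pol ?W nf ?p [] B) \<subseteq> set Ss"
    and syms: "\<forall>fs\<in>set Fs. set fs \<subseteq> sk_syms nf ?W (spos pol ?p [] B)"
    and new: "\<forall>fs\<in>set Fs. set fs \<inter> funs (fill Cx B) = {}"
    using ex_skax_seq_skolem_axioms[OF new_inj new_fresh funs_fill W] .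
  show "\<exists>Ss Fs. skax_seq ?W Ss Fs \<and>
      (\<forall>fs\<in>set Fs. set fs \<subseteq> (\<lambda>(q, i). nf q i) ` (spos pol ?p [] B \<times> {..<?W})) \<and>
      (entails ops imp TYPE('u) Ss (fill Cx (sk pol ?W nf ?p [] B)) \<longrightarrow> entails ops imp TYPE('u) Ss (fill Cx B))"
    using seq syms entails_fill_if_entails_fill_sk[OF lat seq axioms new] by blast
  show "\<forall>Ss Fs (A :: ('c, 'p, 'f) fm). skax_seq ?W Ss Fs \<and> (\<forall>fs\<in>set Fs. set fs \<inter> funs A = {}) \<and>
      entails ops imp TYPE('u) Ss A \<longrightarrow> valid ops imp TYPE('u) A"
    using valid_if_skax_seq_entails[OF lat] by blast
qed

end
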